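(* Let $r,k\in\mathbb Z$ with $0\le k\le r$ and suppose Assumptions (A1), (A2), (A3) hold. Let $l,\check r\in\mathbb N_0$ and set $j_{\min}:=\min\{\check r,r+1,r^{\mathscr I}_{\mathcal I}+2\}$, $j_{\max}:=\max\{k_{\mathcal J}+1,l,j_{\min}\}$. Then for all $v\in C^{j_{\max}}(\overline I_n,\mathbb R^d)$, $$\sup_{t\in I_n}\|(v-\mathcal J_nv)^{(l)}(t)\|\le C\sum_{j=j_{\min}}^{j_{\max}}\big(\tfrac{\tau_n}{2}\big)^{j-l}\sup_{t\in I_n}\|v^{(j)}(t)\|$$ with $C$ independent of $\tau_n$ and $n$.
   Context: Mesh $t_0<\dots<t_N$, $I_n=(t_{n-1},t_n]$, $\tau_n=t_n-t_{n-1}\le1$; one-sided limits $v(t_n^\pm)$. $T_n(\hat t)=\frac{t_n+t_{n-1}}{2}+\frac{\tau_n}{2}\hat t$. $\|\cdot\|$, $(\cdot,\cdot)$ Euclidean norm/inner product; $P_s$ polynomials of degree $\le s$, $P_{-1}:=\{0\}$; $\delta_{i,j}$ Kronecker symbol. Operators: $\widehat{\mathscr I}$ linear functional, $\widehat{\mathcal I}$ linear operator; $k_{\mathscr I},k_{\mathcal I}\ge0$ smallest integers with well-definedness on $C^{k_{\mathscr I}}([-1,1])$ resp. $C^{k_{\mathcal I}}([-1,1])$; $\widehat{\mathcal I}\hat v\in C^l$ whenever $\hat v\in C^{\max\{k_{\mathcal I},l\}}$. Local: $\mathscr I_n[\varphi]=\frac{\tau_n}{2}\widehat{\mathscr I}[\varphi\circ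 T_n]$, $\mathcal I_n\psi=(\widehat{\mathcal I}(\psi\circ T_n))\circ T_n^{-1}$, componentwise. $k_{\mathcal J}:=\max\{\lfloor k/2\rfloor-1,k_{\mathscr I},k_{\mathcal I}\}$. $r^{\mathscr I}_{\mathcal I,i}\in\mathbb N_0\cup\{-1,\infty\}$ is the largest number such that $\mathscr I_n[\varphi\psi]=\mathscr I_n[(\mathcal I_n\varphi)\psi]$ for all $\varphi\in P_{r^{\mathscr I}_{\mathcal I,i}}(I_n)$, $\psi\in P_i(I_n)$; $r^{\mathscr I}_{\mathcal I}:=r^{\mathscr I}_{\mathcal I,r-k}$. $\mathcal J_nv\in P_r(I_n,\mathbb R^d)$: if $k\ge1$, $(\mathcal J_nv)^{(i)}(t_{n-1}^+)=v^{(i)}(t_{n-1}^+)$, $i=0,\dots,\lfloor (k-1)/2\rfloor$; if $k\ge2$, $(\mathcal J_nv)^{(i)}(t_n^-)=v^{(i)}(t_n^-)$, $i=1,\dots,\lfloor k/2\rfloor$; $\mathscr I_n[((\mathcal J_nv)',\varphi)]+\delta_{0,k}(\mathcal J_nv(t_{n-1}^+),\varphi(t_{n-1}^+))=\mathscr I_n[(\mathcal I_n(v'),\varphi)]+\delta_{0,k}(v(t_{n-1}^+),\varphi(t_{n-1}^+))$ for all $\varphi\in P_{r-k}(I_n,\mathbb R^d)$. (A1): if $\hat\psi\in P_{r-\max\{1,k\}}([-1,1])$ and $\widehat{\mathscr I}[(1-\hat t)^{\lfloor k/2\rfloor}(1+\hat t)^{|\lfloor (k-1)/2\rfloor|}\hat\psi\hat\varphi]=0$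 for all $\hat\varphi\in P_{r-\max\{1,k\}}([-1,1])$, then $\hat\psi\equiv0$. (A2): $\|\widehat{\mathscr I}[\hat\varphi]\|\le\mathfrak C_0\sum_{j=0}^{k_{\mathscr I}}\sup_{[-1,1]}\|\hat\varphi^{(j)}\|$ for all $\hat\varphi\in C^{k_{\mathscr I}}([-1,1],\mathbb R^d)$. (A3): for $0\le l\le k_{\mathscr I}$, $\sup_{[-1,1]}\|(\widehat{\mathcal I}\hat\varphi)^{(l)}\|\le\mathfrak C_1\sum_{j=0}^{\max\{k_{\mathcal I},l\}}\sup_{[-1,1]}\|\hat\varphi^{(j)}\|$ for all $\hat\varphi\in C^{\max\{k_{\mathcal I},l\}}([-1,1],\mathbb R^d)$. *)

theory Defs
  imports "HOL-Analysis.Analysis"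
begin

fun nderiv :: "nat \<Rightarrow> real set \<Rightarrow> (real \<Rightarrow> 'a::real_normed_vector) \<Rightarrow> real \<Rightarrow> 'a" where
  "nderiv 0 S f = f"
| "nderiv (Suc j) S f = (\<lambda>t. vector_derivative (nderiv j S f) (at t within S))"

definition Ck_on :: "nat \<Rightarrow> real set \<Rightarrow> (real \<Rightarrow> 'a::real_normed_vector) \<Rightarrow> bool" where
  "Ck_on k S f \<longleftrightarrow>
     (\<forall>j<k. \<forall>t\<in>S. nderiv j S f differentiable (at t within S)) \<and> continuous_on S (nderiv k S f)"

definition supn :: "nat \<Rightarrow> real set \<Rightarrow> (real \<Rightarrow> 'a::real_normed_vector) \<Rightarrow> real set \<Rightarrow> real" where
  "supn j S f A = Sup ((\<lambda>t. norm (nderiv j S f t)) ` A)"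

section \<open>Polynomials of degree \<le> s (s an integer, P_s = {0} for s < 0)\<close>

definition Pdeg :: "int \<Rightarrow> (real \<Rightarrow> real) set" where
  "Pdeg s = {f. \<exists>c::nat \<Rightarrow> real. f = (\<lambda>t. \<Sum>i<nat (s + 1). c i * t ^ i)}"

definition VPdeg :: "int \<Rightarrow> (real \<Rightarrow> real ^ 'd) set" where
  "VPdeg s = {f. \<exists>c::nat \<Rightarrow> real ^ 'd. f = (\<lambda>t. \<Sum>i<nat (s + 1). t ^ i *\<^sub>R c i)}"

definition Tmap :: "real \<Rightarrow> real \<Rightarrow> real \<Rightarrow> real" where
  "Tmap a b s = (b + a) / 2 + (b - a) / 2 * s"

definition Tinv :: "real \<Rightarrow> real \<Rightarrow> real \<Rightarrow> real" where
  "Tinv a b t = (2 * t - (b + a)) / (b - a)"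

definition compI :: "((real \<Rightarrow> real) \<Rightarrow> real) \<Rightarrow> (real \<Rightarrow> real ^ 'd) \<Rightarrow> real ^ 'd" where
  "compI Ih f = (\<chi> i. Ih (\<lambda>s. f s $ i))"

definition compOp :: "((real \<Rightarrow> real) \<Rightarrow> (real \<Rightarrow> real)) \<Rightarrow> (real \<Rightarrow> real ^ 'd) \<Rightarrow> real \<Rightarrow> real ^ 'd" where
  "compOp Iop f = (\<lambda>t. \<chi> i. Iop (\<lambda>s. f s $ i) t)"

definition locI :: "((real \<Rightarrow> real) \<Rightarrow> real) \<Rightarrow> real \<Rightarrow> real \<Rightarrow> (real \<Rightarrow> real) \<Rightarrow> real" where
  "locI Ih a b f = (b - a) / 2 * Ih (\<lambda>s. f (Tmap a b s))"

definition locOpS :: "((real \<Rightarrow> real) \<Rightarrow> (real \<Rightarrow> real)) \<Rightarrow> real \<Rightarrow> real \<Rightarrow> (real \<Rightarrow> real) \<Rightarrow> real \<Rightarrow> real" where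
  "locOpS Iop a b f = (\<lambda>t. Iop (\<lambda>s. f (Tmap a b s)) (Tinv a b t))"

definition locOpV :: "((real \<Rightarrow> real) \<Rightarrow> (real \<Rightarrow> real)) \<Rightarrow> real \<Rightarrow> real \<Rightarrow> (real \<Rightarrow> real ^ 'd) \<Rightarrow> real \<Rightarrow> real ^ 'd" where
  "locOpV Iop a b f = (\<lambda>t. compOp Iop (\<lambda>s. f (Tmap a b s)) (Tinv a b t))"

definition exact_for :: "((real \<Rightarrow> real) \<Rightarrow> real) \<Rightarrow> ((real \<Rightarrow> real) \<Rightarrow> (real \<Rightarrow> real))
    \<Rightarrow> real \<Rightarrow> real \<Rightarrow> int \<Rightarrow> int \<Rightarrow> bool" where
  "exact_for Ih Iop a b s i \<longleftrightarrow>
     (\<forall>\<phi>\<in>Pdeg s. \<forall>\<psi>\<in>Pdeg i.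
        locI Ih a b (\<lambda>t. \<phi> t * \<psi> t) = locI Ih a b (\<lambda>t. locOpS Iop a b \<phi> t * \<psi> t))"

text \<open>largest number in N0 \<union> {-1, \<infinity>} with the exactness property (as an extended real)\<close>
definition rII :: "((real \<Rightarrow> real) \<Rightarrow> real) \<Rightarrow> ((real \<Rightarrow> real) \<Rightarrow> (real \<Rightarrow> real))
    \<Rightarrow> real \<Rightarrow> real \<Rightarrow> int \<Rightarrow> ereal" where
  "rII Ih Iop a b i = Sup {ereal (real_of_int s) | s. s \<ge> -1 \<and> exact_for Ih Iop a b s i}"

definition jmin :: "((real \<Rightarrow> real) \<Rightarrow> real) \<Rightarrow> ((real \<Rightarrow> real) \<Rightarrow> (real \<Rightarrow> real))
    \<Rightarrow> real \<Rightarrow> real \<Rightarrow> nat \<Rightarrow> nat \<Rightarrow> nat \<Rightarrow> nat" where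
  "jmin Ih Iop a b r k rc =
     (let rr = rII Ih Iop a b (int r - int k) in
      if rr = \<infinity> then min rc (r + 1)
      else min rc (min (r + 1) (nat (\<lfloor>real_of_ereal rr\<rfloor> + 2))))"

definition is_Jn :: "((real \<Rightarrow> real) \<Rightarrow> real) \<Rightarrow> ((real \<Rightarrow> real) \<Rightarrow> (real \<Rightarrow> real))
    \<Rightarrow> nat \<Rightarrow> nat \<Rightarrow> real \<Rightarrow> real \<Rightarrow> (real \<Rightarrow> real ^ 'd) \<Rightarrow> (real \<Rightarrow> real ^ 'd) \<Rightarrow> bool" where
  "is_Jn Ih Iop r k a b v p \<longleftrightarrow>
     p \<in> VPdeg (int r) \<and>
     (k \<ge> 1 \<longrightarrow> (\<forall>i \<le> (k - 1) div 2. nderiv i {a..b} p a = nderiv i {a..b} v a)) \<and>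
     (k \<ge> 2 \<longrightarrow> (\<forall>i \<in> {1..k div 2}. nderiv i {a..b} p b = nderiv i {a..b} v b)) \<and>
     (\<forall>\<phi>\<in>VPdeg (int r - int k).
        locI Ih a b (\<lambda>t. inner (nderiv 1 {a..b} p t) (\<phi> t))
          + (if k = 0 then inner (p a) (\<phi> a) else 0)
        = locI Ih a b (\<lambda>t. inner (locOpV Iop a b (nderiv 1 {a..b} v) t) (\<phi> t))
          + (if k = 0 then inner (v a) (\<phi> a) else 0))"

end

theory Submission
  imports Defs "HOL-Computational_Algebra.Polynomial"
begin

text \<open>
  The estimate is proved on the reference interval \<open>[-1, 1]\<close> and carried to \<open>I\<^sub>n\<close> by \<open>T\<^sub>n\<close>,
  which multiplies the \<open>j\<close>-th derivative by \<open>(\<tau>\<^sub>n/2)\<^sup>j\<close>.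

  On \<open>[-1, 1]\<close> the conditions defining \<open>\<J>\<^sub>n\<close> are finitely many linear functionals
  (degrees of freedom): derivatives at the endpoints and moments \<open>Ih[t\<^sup>m p']\<close>, where the data side
  uses \<open>Iop v'\<close> in place of \<open>p'\<close>. By (A1) they determine polynomials of degree \<open>\<le> r\<close>, so the
  coefficients of a polynomial are bounded by its degrees of freedom. Exactness of the quadrature
  makes both kinds of functionals agree on polynomials of degree \<open>< j\<^sub>m\<^sub>i\<^sub>n\<close>. Subtracting the Taylor
  polynomial of order \<open>j\<^sub>m\<^sub>i\<^sub>n\<close> of \<open>v\<close> therefore leaves only degrees of freedom of the Taylor
  remainder, which (A2) and (A3) bound by the derivatives of \<open>v\<close> of order \<open>j\<^sub>m\<^sub>i\<^sub>n\<close> to \<open>j\<^sub>m\<^sub>a\<^sub>x\<close>.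
\<close>

section \<open>Higher derivatives on compact intervals\<close>

lemma nderiv_Suc_inner: "nderiv (Suc j) S f = nderiv j S (nderiv 1 S f)"
  by (induction j) auto

lemma nderiv_nderiv_Suc0: "nderiv j S (nderiv (Suc 0) S f) = nderiv (Suc j) S f"
  using nderiv_Suc_inner[of j S f] by simp

declare nderiv.simps(2)[simp del]

lemma vector_derivative_within_Icc:
  fixes f :: "real \<Rightarrow> 'a::real_normed_vector"
  assumes "x < y" "t \<in> {x..y}" "(f has_vector_derivative f') (at t within {x..y})"
  shows "vector_derivative f (at t within {x..y}) = f'"
  using vector_derivative_within_cbox[of x y t f f'] assms by simp

lemma nderiv_eq_tower:
  fixes f :: "real \<Rightarrow> 'a::real_normed_vector"
  assumes xy: "x < y" and D0: "\<And>t. t \<in> {x..y} \<Longrightarrow> D 0 t = f t"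
    and DD: "\<And>j t. j < m \<Longrightarrow> t \<in> {x..y} \<Longrightarrow>
      (D j has_vector_derivative D (Suc j) t) (at t within {x..y})"
  shows "j \<le> m \<Longrightarrow> t \<in> {x..y} \<Longrightarrow> nderiv j {x..y} f t = D j t"
proof (induction j arbitrary: t)
  case 0
  then show ?case using D0 by simp
next
  case (Suc j)
  have "\<And>s. s \<in> {x..y} \<Longrightarrow> nderiv j {x..y} f s = D j s" using Suc by auto
  then have "(nderiv j {x..y} f has_vector_derivative D (Suc j) t) (at t within {x..y})"
    using has_vector_derivative_transform DD Suc.prems by (metis Suc_le_lessD)
  then show ?case
    using vector_derivative_within_Icc[OF xy Suc.prems(2)] by (simp add: nderiv.simps(2))
qed

lemma Ck_on_tower:
  fixes f :: "real \<Rightarrow> 'a::real_normed_vector"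
  assumes xy: "x < y" and D0: "\<And>t. t \<in> {x..y} \<Longrightarrow> D 0 t = f t"
    and DD: "\<And>j t. j < m \<Longrightarrow> t \<in> {x..y} \<Longrightarrow>
      (D j has_vector_derivative D (Suc j) t) (at t within {x..y})"
    and cont: "continuous_on {x..y} (D m)"
  shows "Ck_on m {x..y} f"
  unfolding Ck_on_def
proof safe
  note tower = nderiv_eq_tower[OF xy D0 DD]
  fix j t assume j: "j < m" and t: "t \<in> {x..y}"
  have "(nderiv j {x..y} f has_vector_derivative D (Suc j) t) (at t within {x..y})"
    by (rule has_vector_derivative_transform[OF t _ DD[OF j t]]) (use tower j in auto)
  then show "nderiv j {x..y} f differentiable at t within {x..y}"
    by (rule differentiableI_vector)
next
  show "continuous_on {x..y} (nderiv m {x..y} f)"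
    using continuous_on_eq[OF cont] nderiv_eq_tower[OF xy D0 DD] by auto
qed

lemma Ck_on_has_vector_derivative:
  fixes f :: "real \<Rightarrow> 'a::real_normed_vector"
  assumes "Ck_on m S f" "j < m" "t \<in> S"
  shows "(nderiv j S f has_vector_derivative nderiv (Suc j) S f t) (at t within S)"
  using assms unfolding Ck_on_def by (auto simp: nderiv.simps(2) vector_derivative_works[symmetric])

lemma Ck_on_continuous:
  fixes f :: "real \<Rightarrow> 'a::real_normed_vector"
  assumes "Ck_on m S f" "j \<le> m"
  shows "continuous_on S (nderiv j S f)"
proof (cases "j = m")
  case False
  then show ?thesis using assms unfolding Ck_on_def
    by (auto simp: continuous_on_eq_continuous_within intro: differentiable_imp_continuous_within)
qed (use assms Ck_on_def in auto)

lemma Ck_on_mono: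
  fixes f :: "real \<Rightarrow> 'a::real_normed_vector"
  assumes "Ck_on m S f" "m' \<le> m"
  shows "Ck_on m' S f"
  using assms Ck_on_continuous[OF assms] unfolding Ck_on_def by auto

lemma Ck_on_Suc_iff:
  fixes f :: "real \<Rightarrow> 'a::real_normed_vector"
  shows "Ck_on (Suc m) S f \<longleftrightarrow>
    (\<forall>t\<in>S. f differentiable at t within S) \<and> Ck_on m S (nderiv 1 S f)"
proof -
  have shift: "nderiv j S (nderiv 1 S f) = nderiv (Suc j) S f" for j
    by (rule nderiv_Suc_inner[symmetric])
  have "(\<forall>j<Suc m. P j) \<longleftrightarrow> P 0 \<and> (\<forall>j<m. P (Suc j))" for P
    using less_Suc_eq_0_disj by auto
  then show ?thesis unfolding Ck_on_def shift by auto
qed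

lemma Ck_on_nderiv1:
  fixes f :: "real \<Rightarrow> 'a::real_normed_vector"
  assumes "Ck_on M S f" "m < M"
  shows "Ck_on m S (nderiv 1 S f)"
proof -
  have "Ck_on (Suc m) S f" using assms Ck_on_mono by (metis Suc_leI)
  then show ?thesis using Ck_on_Suc_iff by blast
qed

lemma nderiv_cong:
  fixes f :: "real \<Rightarrow> 'a::real_normed_vector"
  assumes "\<And>t. t \<in> S \<Longrightarrow> f t = g t" "t \<in> S"
  shows "nderiv j S f t = nderiv j S g t"
  using assms(2)
proof (induction j arbitrary: t)
  case (Suc j)
  have "vector_derivative (nderiv j S f) (at t within S) = vector_derivative (nderiv j S g) (at t within S)"
    by (rule vector_derivative_cong_eq) (use Suc in \<open>auto intro: always_eventually\<close>)
  then show ?case by (simp add: nderiv.simps(2))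
qed (use assms in simp)

lemma Ck_on_cong_Icc:
  fixes f :: "real \<Rightarrow> 'a::real_normed_vector"
  assumes xy: "x < y" and eq: "\<And>t. t \<in> {x..y} \<Longrightarrow> f t = g t" and f: "Ck_on m {x..y} f"
  shows "Ck_on m {x..y} g"
  by (rule Ck_on_tower[OF xy, where D = "\<lambda>j. nderiv j {x..y} f"])
    (use eq Ck_on_has_vector_derivative[OF f] Ck_on_continuous[OF f] in auto)

lemma Ck_on_linear:
  fixes f :: "real \<Rightarrow> 'a::real_normed_vector" and L :: "'a \<Rightarrow> 'b::real_normed_vector"
  assumes L: "bounded_linear L" and xy: "x < y" and f: "Ck_on m {x..y} f"
  shows "Ck_on m {x..y} (\<lambda>t. L (f t))"
proof (rule Ck_on_tower[OF xy, where D = "\<lambda>j t. L (nderiv j {x..y} f t)"])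
  show "\<And>j t. j < m \<Longrightarrow> t \<in> {x..y} \<Longrightarrow> ((\<lambda>t. L (nderiv j {x..y} f t))
      has_vector_derivative L (nderiv (Suc j) {x..y} f t)) (at t within {x..y})"
    by (rule bounded_linear.has_vector_derivative[OF L Ck_on_has_vector_derivative[OF f]])
  show "continuous_on {x..y} (\<lambda>t. L (nderiv m {x..y} f t))"
    by (rule continuous_on_compose2[OF linear_continuous_on[OF L] Ck_on_continuous[OF f]]) auto
qed simp

lemma nderiv_linear:
  fixes f :: "real \<Rightarrow> 'a::real_normed_vector" and L :: "'a \<Rightarrow> 'b::real_normed_vector"
  assumes L: "bounded_linear L" and xy: "x < y" and f: "Ck_on m {x..y} f"
    and "j \<le> m" "t \<in> {x..y}"
  shows "nderiv j {x..y} (\<lambda>t. L (f t)) t = L (nderiv j {x..y} f t)"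
  by (rule nderiv_eq_tower[OF xy, where D = "\<lambda>j t. L (nderiv j {x..y} f t)"])
    (use assms bounded_linear.has_vector_derivative[OF L Ck_on_has_vector_derivative[OF f]] in auto)

lemma Ck_on_add:
  fixes f g :: "real \<Rightarrow> 'a::real_normed_vector"
  assumes xy: "x < y" and f: "Ck_on m {x..y} f" and g: "Ck_on m {x..y} g"
  shows "Ck_on m {x..y} (\<lambda>t. f t + g t)"
  by (rule Ck_on_tower[OF xy, where D = "\<lambda>j t. nderiv j {x..y} f t + nderiv j {x..y} g t"])
    (auto intro!: has_vector_derivative_add Ck_on_has_vector_derivative[OF f]
      Ck_on_has_vector_derivative[OF g] continuous_on_add Ck_on_continuous[OF f] Ck_on_continuous[OF g])

lemma nderiv_add:
  fixes f g :: "real \<Rightarrow> 'a::real_normed_vector"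
  assumes xy: "x < y" and f: "Ck_on m {x..y} f" and g: "Ck_on m {x..y} g"
    and "j \<le> m" "t \<in> {x..y}"
  shows "nderiv j {x..y} (\<lambda>t. f t + g t) t = nderiv j {x..y} f t + nderiv j {x..y} g t"
  by (rule nderiv_eq_tower[OF xy, where D = "\<lambda>j t. nderiv j {x..y} f t + nderiv j {x..y} g t"])
    (use assms in \<open>auto intro!: has_vector_derivative_add Ck_on_has_vector_derivative[OF f]
      Ck_on_has_vector_derivative[OF g]\<close>)

lemma Ck_on_diff:
  fixes f g :: "real \<Rightarrow> 'a::real_normed_vector"
  assumes xy: "x < y" and f: "Ck_on m {x..y} f" and g: "Ck_on m {x..y} g"
  shows "Ck_on m {x..y} (\<lambda>t. f t - g t)"
  by (rule Ck_on_tower[OF xy, where D = "\<lambda>j t. nderiv j {x..y} f t - nderiv j {x..y} g t"])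
    (auto intro!: has_vector_derivative_diff Ck_on_has_vector_derivative[OF f]
      Ck_on_has_vector_derivative[OF g] continuous_on_diff Ck_on_continuous[OF f] Ck_on_continuous[OF g])

lemma nderiv_diff:
  fixes f g :: "real \<Rightarrow> 'a::real_normed_vector"
  assumes xy: "x < y" and f: "Ck_on m {x..y} f" and g: "Ck_on m {x..y} g"
    and "j \<le> m" "t \<in> {x..y}"
  shows "nderiv j {x..y} (\<lambda>t. f t - g t) t = nderiv j {x..y} f t - nderiv j {x..y} g t"
  by (rule nderiv_eq_tower[OF xy, where D = "\<lambda>j t. nderiv j {x..y} f t - nderiv j {x..y} g t"])
    (use assms in \<open>auto intro!: has_vector_derivative_diff Ck_on_has_vector_derivative[OF f]
      Ck_on_has_vector_derivative[OF g]\<close>)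

lemma Ck_on_const: "x < y \<Longrightarrow> Ck_on m {x..y} (\<lambda>t. c)"
  by (rule Ck_on_tower[where D = "\<lambda>j t. if j = 0 then c else 0"]) auto

lemma nderiv_const: "x < y \<Longrightarrow> t \<in> {x..y} \<Longrightarrow> nderiv j {x..y} (\<lambda>t. c) t = (if j = 0 then c else 0)"
  by (rule nderiv_eq_tower[where m = j and D = "\<lambda>j t. if j = 0 then c else 0"]) auto

lemma Ck_on_sum:
  fixes f :: "'i \<Rightarrow> real \<Rightarrow> 'a::real_normed_vector"
  assumes xy: "x < y" and "\<And>i. i \<in> A \<Longrightarrow> Ck_on m {x..y} (f i)"
  shows "Ck_on m {x..y} (\<lambda>t. \<Sum>i\<in>A. f i t)"
  using assms(2)
proof (induction A rule: infinite_finite_induct)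
  case (insert a A)
  then show ?case by (simp add: Ck_on_add[OF xy])
qed (simp_all add: Ck_on_const[OF xy])

lemma nderiv_sum:
  fixes f :: "'i \<Rightarrow> real \<Rightarrow> 'a::real_normed_vector"
  assumes xy: "x < y" and "\<And>i. i \<in> A \<Longrightarrow> Ck_on m {x..y} (f i)"
    and j: "j \<le> m" and t: "t \<in> {x..y}"
  shows "nderiv j {x..y} (\<lambda>t. \<Sum>i\<in>A. f i t) t = (\<Sum>i\<in>A. nderiv j {x..y} (f i) t)"
  using assms(2)
proof (induction A rule: infinite_finite_induct)
  case (insert a A)
  have "nderiv j {x..y} (\<lambda>t. f a t + (\<Sum>i\<in>A. f i t)) t
      = nderiv j {x..y} (f a) t + nderiv j {x..y} (\<lambda>t. \<Sum>i\<in>A. f i t) t"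
    using insert by (intro nderiv_add[OF xy _ _ j t]) (auto intro: Ck_on_sum[OF xy])
  then show ?case using insert by simp
qed (simp_all add: nderiv_const[OF xy t])

lemma affine_image_Icc:
  fixes \<alpha> \<beta> u w :: real
  assumes "u < w" "\<beta> > 0"
  shows "(\<lambda>s. \<alpha> + \<beta> * s) ` {u..w} = {\<alpha> + \<beta> * u..\<alpha> + \<beta> * w}"
  using image_affinity_atLeastAtMost[of \<beta> \<alpha> u w] assms by (simp add: add.commute mult.commute)

lemma has_vector_derivative_nderiv_affine:
  fixes f :: "real \<Rightarrow> 'a::real_normed_vector"
  assumes uw: "u < w" and \<beta>: "\<beta> > 0" and f: "Ck_on m {\<alpha> + \<beta> * u..\<alpha> + \<beta> * w} f"
    and j: "j < m" and t: "t \<in> {u..w}"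
  defines "S \<equiv> {\<alpha> + \<beta> * u..\<alpha> + \<beta> * w}"
  shows "((\<lambda>s. \<beta> ^ j *\<^sub>R nderiv j S f (\<alpha> + \<beta> * s)) has_vector_derivative
    \<beta> ^ Suc j *\<^sub>R nderiv (Suc j) S f (\<alpha> + \<beta> * t)) (at t within {u..w})"
proof -
  have img: "(\<lambda>s. \<alpha> + \<beta> * s) ` {u..w} = S"
    unfolding S_def by (rule affine_image_Icc[OF uw \<beta>])
  have "((\<lambda>s. \<alpha> + \<beta> * s) has_vector_derivative \<beta>) (at t within {u..w})"
    by (auto intro!: derivative_eq_intros simp: has_real_derivative_iff_has_vector_derivative[symmetric])
  moreover have "(nderiv j S f has_vector_derivative nderiv (Suc j) S f (\<alpha> + \<beta> * t))
      (at (\<alpha> + \<beta> * t) within (\<lambda>s. \<alpha> + \<beta> * s) ` {u..w})"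
    unfolding img S_def by (rule Ck_on_has_vector_derivative[OF f j]) (use t img S_def in blast)
  ultimately have "((nderiv j S f \<circ> (\<lambda>s. \<alpha> + \<beta> * s)) has_vector_derivative
      \<beta> *\<^sub>R nderiv (Suc j) S f (\<alpha> + \<beta> * t)) (at t within {u..w})"
    by (rule vector_diff_chain_within)
  from bounded_linear.has_vector_derivative[OF bounded_linear_scaleR_right this, of "\<beta> ^ j"]
  show ?thesis by (simp add: o_def mult.commute)
qed

lemma Ck_on_affine:
  fixes f :: "real \<Rightarrow> 'a::real_normed_vector"
  assumes uw: "u < w" and \<beta>: "\<beta> > 0" and f: "Ck_on m {\<alpha> + \<beta> * u..\<alpha> + \<beta> * w} f"
  shows "Ck_on m {u..w} (\<lambda>s. f (\<alpha> + \<beta> * s))"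
proof (rule Ck_on_tower[OF uw,
    where D = "\<lambda>j s. \<beta> ^ j *\<^sub>R nderiv j {\<alpha> + \<beta> * u..\<alpha> + \<beta> * w} f (\<alpha> + \<beta> * s)"])
  show "continuous_on {u..w} (\<lambda>s. \<beta> ^ m *\<^sub>R nderiv m {\<alpha> + \<beta> * u..\<alpha> + \<beta> * w} f (\<alpha> + \<beta> * s))"
    by (intro continuous_intros continuous_on_compose2[OF Ck_on_continuous[OF f order_refl]])
      (use affine_image_Icc[OF uw \<beta>] in auto)
qed (use has_vector_derivative_nderiv_affine[OF uw \<beta> f] in auto)

lemma nderiv_affine:
  fixes f :: "real \<Rightarrow> 'a::real_normed_vector"
  assumes uw: "u < w" and \<beta>: "\<beta> > 0" and f: "Ck_on m {\<alpha> + \<beta> * u..\<alpha> + \<beta> * w} f"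
    and "j \<le> m" "s \<in> {u..w}"
  shows "nderiv j {u..w} (\<lambda>s. f (\<alpha> + \<beta> * s)) s
    = \<beta> ^ j *\<^sub>R nderiv j {\<alpha> + \<beta> * u..\<alpha> + \<beta> * w} f (\<alpha> + \<beta> * s)"
  by (rule nderiv_eq_tower[OF uw]) (use assms has_vector_derivative_nderiv_affine[OF uw \<beta> f] in auto)

lemma Ck_on_poly: "x < y \<Longrightarrow> Ck_on m {x..y} (poly p)"
  by (rule Ck_on_tower[where D = "\<lambda>j. poly ((pderiv ^^ j) p)"])
    (auto intro: continuous_intros simp: has_real_derivative_iff_has_vector_derivative[symmetric]
      poly_DERIV has_field_derivative_at_within)

lemma nderiv_poly:
  "x < y \<Longrightarrow> t \<in> {x..y} \<Longrightarrow> nderiv j {x..y} (poly p) t = poly ((pderiv ^^ j) p) t"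
  by (rule nderiv_eq_tower[where m = j and D = "\<lambda>j. poly ((pderiv ^^ j) p)"])
    (auto simp: has_real_derivative_iff_has_vector_derivative[symmetric] poly_DERIV has_field_derivative_at_within)

lemma poly_monom_one: "(\<lambda>s::real. s ^ i) = poly (monom 1 i)"
  by (rule ext) (simp add: poly_monom)

lemma Ck_on_power: "x < y \<Longrightarrow> Ck_on m {x..y} (\<lambda>s::real. s ^ i)"
  unfolding poly_monom_one by (rule Ck_on_poly)

lemma has_vector_derivative_scaleR_Ck:
  fixes f :: "real \<Rightarrow> real" and g :: "real \<Rightarrow> 'a::real_normed_vector"
  assumes f: "Ck_on (Suc m) S f" and g: "Ck_on (Suc m) S g" and t: "t \<in> S"
  shows "((\<lambda>t. f t *\<^sub>R g t) has_vector_derivative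
    nderiv 1 S f t *\<^sub>R g t + f t *\<^sub>R nderiv 1 S g t) (at t within S)"
proof -
  have "(f has_field_derivative nderiv 1 S f t) (at t within S)"
    using Ck_on_has_vector_derivative[OF f _ t, of 0]
    by (simp add: has_real_derivative_iff_has_vector_derivative)
  from has_vector_derivative_scaleR[OF this Ck_on_has_vector_derivative[OF g _ t, of 0]]
  show ?thesis by (simp add: add.commute)
qed

lemma Ck_on_scaleR:
  fixes f :: "real \<Rightarrow> real" and g :: "real \<Rightarrow> 'a::real_normed_vector"
  assumes xy: "x < y"
  shows "Ck_on m {x..y} f \<Longrightarrow> Ck_on m {x..y} g \<Longrightarrow> Ck_on m {x..y} (\<lambda>t. f t *\<^sub>R g t)"
proof (induction m arbitrary: f g)
  case 0
  then show ?case unfolding Ck_on_def by (auto intro: continuous_on_scaleR)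
next
  case (Suc m)
  let ?I = "{x..y}"
  have hd: "\<And>t. t \<in> ?I \<Longrightarrow> ((\<lambda>t. f t *\<^sub>R g t) has_vector_derivative
      nderiv 1 ?I f t *\<^sub>R g t + f t *\<^sub>R nderiv 1 ?I g t) (at t within ?I)"
    by (rule has_vector_derivative_scaleR_Ck[OF Suc.prems])
  have "Ck_on m ?I (nderiv 1 ?I f)" "Ck_on m ?I (nderiv 1 ?I g)"
    using Suc.prems Ck_on_Suc_iff by blast+
  then have "Ck_on m ?I (\<lambda>t. nderiv 1 ?I f t *\<^sub>R g t + f t *\<^sub>R nderiv 1 ?I g t)"
    using Ck_on_mono[OF Suc.prems(1)] Ck_on_mono[OF Suc.prems(2)]
    by (intro Ck_on_add[OF xy] Suc.IH) auto
  then have "Ck_on m ?I (nderiv 1 ?I (\<lambda>t. f t *\<^sub>R g t))"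
    by (rule Ck_on_cong_Icc[OF xy, rotated])
      (use vector_derivative_within_Icc[OF xy _ hd] in \<open>simp add: nderiv.simps(2)\<close>)
  then show ?case using hd Ck_on_Suc_iff differentiableI_vector by blast
qed

lemma Ck_on_mult:
  fixes f g :: "real \<Rightarrow> real"
  shows "x < y \<Longrightarrow> Ck_on m {x..y} f \<Longrightarrow> Ck_on m {x..y} g \<Longrightarrow> Ck_on m {x..y} (\<lambda>t. f t * g t)"
  using Ck_on_scaleR[of x y m f g] by simp

lemma nderiv_scaleR_Suc:
  fixes f :: "real \<Rightarrow> real" and g :: "real \<Rightarrow> 'a::real_normed_vector"
  assumes xy: "x < y" and f: "Ck_on (Suc m) {x..y} f" and g: "Ck_on (Suc m) {x..y} g"
    and t: "t \<in> {x..y}"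
  shows "nderiv (Suc j) {x..y} (\<lambda>t. f t *\<^sub>R g t) t
    = nderiv j {x..y} (\<lambda>t. nderiv 1 {x..y} f t *\<^sub>R g t + f t *\<^sub>R nderiv 1 {x..y} g t) t"
  unfolding nderiv_Suc_inner
  by (rule nderiv_cong[OF _ t]) (use vector_derivative_within_Icc[OF xy _ has_vector_derivative_scaleR_Ck[OF f g]]
      in \<open>simp add: nderiv.simps(2)\<close>)

lemma norm_nderiv_scaleR_le:
  fixes f :: "real \<Rightarrow> real" and g :: "real \<Rightarrow> 'a::real_normed_vector"
  assumes xy: "x < y"
  shows "Ck_on m {x..y} f \<Longrightarrow> Ck_on m {x..y} g \<Longrightarrow> j \<le> m \<Longrightarrow> t \<in> {x..y} \<Longrightarrow>
    norm (nderiv j {x..y} (\<lambda>t. f t *\<^sub>R g t) t)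
      \<le> 2 ^ j * (\<Sum>i\<le>j. \<bar>nderiv i {x..y} f t\<bar>) * (\<Sum>i\<le>j. norm (nderiv i {x..y} g t))"
proof (induction j arbitrary: m f g)
  case (Suc j)
  let ?I = "{x..y}" and ?f1 = "nderiv 1 {x..y} f" and ?g1 = "nderiv 1 {x..y} g"
  obtain m' where m: "m = Suc m'" and jm: "j \<le> m'" using Suc.prems(3) Suc_le_D by blast
  have f: "Ck_on (Suc m') ?I f" and g: "Ck_on (Suc m') ?I g" using Suc.prems m by auto
  then have f1: "Ck_on m' ?I ?f1" and g1: "Ck_on m' ?I ?g1" and fm: "Ck_on m' ?I f" and gm: "Ck_on m' ?I g"
    using Ck_on_Suc_iff Ck_on_mono by (blast, blast, force, force)
  define F where "F i = \<bar>nderiv i ?I f t\<bar>" for i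
  define G where "G i = norm (nderiv i ?I g t)" for i
  have F0: "0 \<le> F i" and G0: "0 \<le> G i" for i by (simp_all add: F_def G_def)
  have shifted: "(\<Sum>i\<le>j. a (Suc i)) \<le> (\<Sum>i\<le>Suc j. a i)"
    and prefix: "(\<Sum>i\<le>j. a i) \<le> (\<Sum>i\<le>Suc j. a i)" if "\<And>i. 0 \<le> a i" for a :: "nat \<Rightarrow> real"
    by (subst sum.atMost_Suc_shift, simp add: that) (simp add: that)
  have "norm (nderiv (Suc j) ?I (\<lambda>t. f t *\<^sub>R g t) t)
      = norm (nderiv j ?I (\<lambda>t. ?f1 t *\<^sub>R g t) t + nderiv j ?I (\<lambda>t. f t *\<^sub>R ?g1 t) t)"
    using nderiv_scaleR_Suc[OF xy f g Suc.prems(4)]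
      nderiv_add[OF xy Ck_on_scaleR[OF xy f1 gm] Ck_on_scaleR[OF xy fm g1] jm Suc.prems(4)] by simp
  also have "\<dots> \<le> 2 ^ j * (\<Sum>i\<le>j. F (Suc i)) * (\<Sum>i\<le>j. G i) + 2 ^ j * (\<Sum>i\<le>j. F i) * (\<Sum>i\<le>j. G (Suc i))"
    using Suc.IH[OF f1 gm jm Suc.prems(4)] Suc.IH[OF fm g1 jm Suc.prems(4)]
    by (intro order_trans[OF norm_triangle_ineq] add_mono) (simp_all add: F_def G_def nderiv_nderiv_Suc0)
  also have "\<dots> \<le> 2 ^ j * (\<Sum>i\<le>Suc j. F i) * (\<Sum>i\<le>Suc j. G i) + 2 ^ j * (\<Sum>i\<le>Suc j. F i) * (\<Sum>i\<le>Suc j. G i)"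
  proof -
    have "(\<Sum>i\<le>j. F (Suc i)) * (\<Sum>i\<le>j. G i) \<le> (\<Sum>i\<le>Suc j. F i) * (\<Sum>i\<le>Suc j. G i)"
      "(\<Sum>i\<le>j. F i) * (\<Sum>i\<le>j. G (Suc i)) \<le> (\<Sum>i\<le>Suc j. F i) * (\<Sum>i\<le>Suc j. G i)"
      by (intro mult_mono shifted prefix F0 G0 sum_nonneg)+
    then show ?thesis by (simp only: mult.assoc) (intro add_mono mult_left_mono; simp)
  qed
  finally show ?case by (simp add: F_def G_def)
qed simp

lemma bdd_above_norm_continuous_Icc:
  fixes h :: "real \<Rightarrow> 'a::real_normed_vector"
  assumes "continuous_on {x..y} h" "A \<subseteq> {x..y}"
  shows "bdd_above ((\<lambda>t. norm (h t)) ` A)"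
proof -
  have "compact ((\<lambda>t. norm (h t)) ` {x..y})"
    by (rule compact_continuous_image) (auto intro: continuous_on_norm assms)
  then have "bdd_above ((\<lambda>t. norm (h t)) ` {x..y})"
    by (intro bounded_imp_bdd_above compact_imp_bounded)
  then show ?thesis using assms(2) by (meson bdd_above_mono image_mono)
qed

lemma norm_nderiv_le_supn:
  fixes f :: "real \<Rightarrow> 'a::real_normed_vector"
  assumes "Ck_on m {x..y} f" "j \<le> m" "A \<subseteq> {x..y}" "t \<in> A"
  shows "norm (nderiv j {x..y} f t) \<le> supn j {x..y} f A"
  unfolding supn_def
  by (rule cSUP_upper[OF assms(4) bdd_above_norm_continuous_Icc[OF Ck_on_continuous[OF assms(1,2)] assms(3)]])

lemma supn_le:
  assumes "A \<noteq> {}" "\<And>t. t \<in> A \<Longrightarrow> norm (nderiv j S f t) \<le> B"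
  shows "supn j S f A \<le> B"
  unfolding supn_def using assms by (intro cSUP_least) auto

lemma supn_nonneg:
  fixes f :: "real \<Rightarrow> 'a::real_normed_vector"
  assumes "Ck_on m {x..y} f" "j \<le> m" "A \<subseteq> {x..y}" "A \<noteq> {}"
  shows "0 \<le> supn j {x..y} f A"
proof -
  obtain t where "t \<in> A" using assms(4) by auto
  then show ?thesis using norm_nderiv_le_supn[OF assms(1-3)] norm_ge_zero order_trans by metis
qed

text \<open>By continuity, the sup over the half-open interval also bounds the endpoint value.\<close>

lemma norm_nderiv_le_supn_open:
  fixes f :: "real \<Rightarrow> 'a::real_normed_vector"
  assumes xy: "x < y" and f: "Ck_on m {x..y} f" and j: "j \<le> m" and t: "t \<in> {x..y}"
  shows "norm (nderiv j {x..y} f t) \<le> supn j {x..y} f {x<..y}"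
proof -
  have c: "continuous_on (closure {x<..y}) (\<lambda>t. norm (nderiv j {x..y} f t))"
    using xy Ck_on_continuous[OF f j] by (auto intro: continuous_on_norm)
  have u: "\<And>s. s \<in> {x<..y} \<Longrightarrow> norm (nderiv j {x..y} f s) \<le> supn j {x..y} f {x<..y}"
    by (rule norm_nderiv_le_supn[OF f j]) auto
  show ?thesis by (rule continuous_le_on_closure[OF c _ u]) (use xy t in auto)
qed

lemma supn_nderiv1: "supn j S (nderiv 1 S f) A = supn (Suc j) S f A"
  unfolding supn_def using nderiv_nderiv_Suc0[of j S f] by simp

section \<open>Polynomials\<close>

lemma poly_sum_monom: "(\<lambda>t. \<Sum>i<n. (c i::real) * t ^ i) = poly (\<Sum>i<n. monom (c i) i)"
  by (rule ext) (simp add: poly_sum poly_monom)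

lemma coeff_sum_monom: "coeff (\<Sum>i<n. monom (c i) i) i = (if i < n then c i else 0)"
  by (simp add: coeff_sum coeff_monom sum.delta)

lemma poly_eq_sum_coeff: "degree (f::real poly) < n \<Longrightarrow> poly f s = (\<Sum>m<n. coeff f m * s ^ m)"
  unfolding poly_altdef by (rule sum.mono_neutral_left) (auto simp: coeff_eq_0)

lemma Pdeg_iff_poly: "f \<in> Pdeg s \<longleftrightarrow> (\<exists>p. f = poly p \<and> (if s < 0 then p = 0 else degree p \<le> nat s))"
proof
  assume "f \<in> Pdeg s"
  then obtain c where f: "f = (\<lambda>t. \<Sum>i<nat (s + 1). c i * t ^ i)" unfolding Pdeg_def by blast
  define p where "p = (\<Sum>i<nat (s + 1). monom (c i) i)"
  have "degree p \<le> nat s"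
    by (rule degree_le) (auto simp: p_def coeff_sum_monom)
  moreover have "f = poly p" unfolding f p_def by (rule poly_sum_monom)
  ultimately show "\<exists>p. f = poly p \<and> (if s < 0 then p = 0 else degree p \<le> nat s)"
    by (auto simp: p_def)
next
  assume "\<exists>p. f = poly p \<and> (if s < 0 then p = 0 else degree p \<le> nat s)"
  then obtain p where f: "f = poly p" and d: "if s < 0 then p = 0 else degree p \<le> nat s" by blast
  have "f t = (\<Sum>i<nat (s + 1). coeff p i * t ^ i)" for t
  proof (cases "s < 0")
    case False
    then show ?thesis using d unfolding f by (intro poly_eq_sum_coeff) auto
  qed (use d f in simp)
  then show "f \<in> Pdeg s" unfolding Pdeg_def by blast
qed

lemma poly_in_Pdeg: "int (degree p) \<le> s \<Longrightarrow> poly p \<in> Pdeg s"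
  unfolding Pdeg_iff_poly by auto

lemma zero_in_Pdeg: "(\<lambda>t. 0) \<in> Pdeg s"
  unfolding Pdeg_iff_poly by (auto intro!: exI[of _ 0])

lemma PdegE:
  assumes "f \<in> Pdeg s"
  obtains p where "f = poly p" "s < 0 \<Longrightarrow> p = 0" "s \<ge> 0 \<Longrightarrow> int (degree p) \<le> s"
  using assms unfolding Pdeg_iff_poly by (metis int_nat_eq le_nat_iff linorder_not_less zle_int)

lemma poly_zero_eq: "poly 0 = (\<lambda>t. 0)"
  by (simp add: fun_eq_iff)

lemma Pdeg_mono:
  assumes "s \<le> s'" "f \<in> Pdeg s"
  shows "f \<in> Pdeg s'"
proof -
  obtain p where fp: "f = poly p" and p1: "s < 0 \<Longrightarrow> p = 0" and p2: "s \<ge> 0 \<Longrightarrow> int (degree p) \<le> s"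
    using assms(2) by (rule PdegE) blast
  show ?thesis
    using assms(1) p1 p2 zero_in_Pdeg[of s'] unfolding fp
    by (cases "s < 0") (auto simp: poly_zero_eq intro: poly_in_Pdeg)
qed

lemma Pdeg_affine:
  assumes "f \<in> Pdeg s"
  shows "(\<lambda>x. f (\<alpha> + \<beta> * x)) \<in> Pdeg s"
proof -
  obtain p where fp: "f = poly p" and p1: "s < 0 \<Longrightarrow> p = 0" and p2: "s \<ge> 0 \<Longrightarrow> int (degree p) \<le> s"
    using assms by (rule PdegE) blast
  have comp: "(\<lambda>x. f (\<alpha> + \<beta> * x)) = poly (pcompose p [:\<alpha>, \<beta>:])"
    unfolding fp by (rule ext) (simp add: poly_pcompose algebra_simps)
  have "degree (pcompose p [:\<alpha>, \<beta>:]) \<le> degree p * degree [:\<alpha>, \<beta>:]"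
    by (rule degree_pcompose_le)
  also have "\<dots> \<le> degree p" by (simp add: mult_le_cancel1)
  finally show ?thesis
    unfolding comp using p1 p2 zero_in_Pdeg[of s]
    by (cases "s < 0") (auto simp: poly_zero_eq intro: poly_in_Pdeg)
qed

lemma poly_pderiv_in_Pdeg:
  assumes "int (degree q) \<le> s"
  shows "poly (pderiv q) \<in> Pdeg (s - 1)"
proof (cases "degree q = 0")
  case True
  then have "pderiv q = 0" by (simp add: pderiv_eq_0_iff)
  then have "poly (pderiv q) = (\<lambda>t. 0)" by (simp add: fun_eq_iff)
  then show ?thesis using zero_in_Pdeg by simp
qed (use assms in \<open>auto simp: degree_pderiv intro: poly_in_Pdeg\<close>)

lemma funpow_pderiv_monom:
  "(pderiv ^^ j) (monom (a::real) i) = (if j \<le> i then monom (a * fact i / fact (i - j)) (i - j) else 0)"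
proof (induction j)
  case (Suc j)
  show ?case
  proof (cases "Suc j \<le> i")
    case True
    have e: "i - j = Suc (i - Suc j)" using True by simp
    have f: "fact (i - j) = real (i - j) * fact (i - Suc j)"
      unfolding e fact_Suc by simp
    have "(pderiv ^^ Suc j) (monom a i) = pderiv (monom (a * fact i / fact (i - j)) (i - j))"
      using Suc True by simp
    also have "\<dots> = monom (real (i - j) * (a * fact i / fact (i - j))) (i - j - 1)"
      by (rule pderiv_monom)
    also have "real (i - j) * (a * fact i / fact (i - j)) = a * fact i / fact (i - Suc j)"
      using True by (simp add: f field_simps)
    finally show ?thesis using True by simp
  next
    case False
    then show ?thesis using Suc by (cases "j = i") (simp_all add: pderiv_monom)
  qed
qed simp

lemma abs_poly_funpow_pderiv_monom_le:
  fixes t :: real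
  assumes "\<bar>t\<bar> \<le> 1"
  shows "\<bar>poly ((pderiv ^^ l) (monom 1 i)) t\<bar> \<le> real i ^ l"
proof (induction l arbitrary: i)
  case 0
  show ?case using assms by (simp add: poly_monom power_abs power_le_one)
next
  case (Suc l)
  have "(pderiv ^^ Suc l) (monom 1 i) = (pderiv ^^ l) (monom (real i) (i - 1))"
    by (simp only: funpow_Suc_right o_apply pderiv_monom mult_1_right)
  also have "\<dots> = smult (real i) ((pderiv ^^ l) (monom 1 (i - 1)))"
    by (simp add: funpow_pderiv_monom smult_monom)
  finally have "\<bar>poly ((pderiv ^^ Suc l) (monom 1 i)) t\<bar>
      = real i * \<bar>poly ((pderiv ^^ l) (monom 1 (i - 1))) t\<bar>"
    by (simp add: abs_mult)
  also have "\<dots> \<le> real i * real (i - 1) ^ l" using Suc.IH by (simp add: mult_left_mono)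
  also have "\<dots> \<le> real i * real i ^ l" by (intro mult_left_mono power_mono) auto
  finally show ?case by simp
qed

lemma order_ge_if_derivatives_vanish:
  fixes p :: "real poly"
  shows "p \<noteq> 0 \<Longrightarrow> (\<forall>i<n. poly ((pderiv ^^ i) p) c = 0) \<Longrightarrow> n \<le> order c p"
proof (induction n arbitrary: p)
  case (Suc n)
  have root: "poly p c = 0" using Suc.prems(2) by (metis funpow_0 zero_less_Suc)
  have "pderiv p \<noteq> 0"
    using Suc.prems(1) root pderiv_iszero by force
  moreover have "\<forall>i<n. poly ((pderiv ^^ i) (pderiv p)) c = 0"
    using Suc.prems(2) by (metis Suc_mono funpow_Suc_right o_apply)
  ultimately have "n \<le> order c (pderiv p)" using Suc.IH by blast
  then show ?case using order_pderiv[OF Suc.prems(1) root] by simp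
qed simp

lemma poly_factor_endpoint_zeros:
  fixes q :: "real poly"
  assumes at1: "\<forall>i<\<alpha>. poly ((pderiv ^^ i) q) 1 = 0" and atm1: "\<forall>i<\<beta>. poly ((pderiv ^^ i) q) (-1) = 0"
  obtains \<psi> where "q = [:-1, 1:] ^ \<alpha> * [:1, 1:] ^ \<beta> * \<psi>"
proof (cases "q = 0")
  case True
  then show ?thesis using that[of 0] by simp
next
  case False
  have "[:1, 1:] ^ \<beta> dvd q"
    using order_1[of "-1" q] power_le_dvd order_ge_if_derivatives_vanish[OF False atm1] by simp
  then obtain r1 where q: "q = [:1, 1:] ^ \<beta> * r1" by (auto elim: dvdE)
  have "poly ([:1, 1::real:] ^ \<beta>) 1 \<noteq> 0" by simp
  then have "order 1 ([:1, 1::real:] ^ \<beta>) = 0" using order_root by blast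
  moreover have "order 1 q = order 1 ([:1, 1::real:] ^ \<beta>) + order 1 r1"
    using False unfolding q by (rule order_mult)
  ultimately have "\<alpha> \<le> order 1 r1" using order_ge_if_derivatives_vanish[OF False at1] by simp
  then have "[:-1, 1:] ^ \<alpha> dvd r1" using order_1[of 1 r1] power_le_dvd by blast
  then obtain \<psi> where "r1 = [:-1, 1:] ^ \<alpha> * \<psi>" by (auto elim: dvdE)
  then show ?thesis using that[of \<psi>] q by (simp add: algebra_simps)
qed

section \<open>Injective linear maps on finite coordinate spaces\<close>

text \<open>Gaussian elimination of the last unknown against a row \<open>j\<^sub>p\<close> with \<open>a j\<^sub>p n \<noteq> 0\<close>.\<close>

lemma elimination_residual:
  fixes a :: "nat \<Rightarrow> nat \<Rightarrow> real"
  assumes "a jp n \<noteq> 0"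
  shows "(\<Sum>i<n. (a j i - a j n / a jp n * a jp i) * c i)
    = (\<Sum>i<Suc n. a j i * c i) - a j n / a jp n * (\<Sum>i<Suc n. a jp i * c i)"
  using assms by (simp add: algebra_simps sum_subtractf sum_distrib_left)

lemma elimination_injective:
  fixes a :: "nat \<Rightarrow> nat \<Rightarrow> real"
  assumes inj: "\<And>c. (\<forall>j<N. (\<Sum>i<Suc n. a j i * c i) = 0) \<Longrightarrow> \<forall>i<Suc n. c i = 0"
    and piv: "a jp n \<noteq> 0"
    and h: "\<forall>j<N. (\<Sum>i<n. (a j i - a j n / a jp n * a jp i) * c i) = 0"
  shows "\<forall>i<n. c i = 0"
proof -
  define c' where "c' = c(n := - (\<Sum>i<n. a jp i * c i) / a jp n)"
  have same: "(\<Sum>i<n. b i * c' i) = (\<Sum>i<n. b i * c i)" for b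
    unfolding c'_def by (intro sum.cong) auto
  have pivot_row: "(\<Sum>i<Suc n. a jp i * c' i) = 0"
    using piv by (simp add: same c'_def field_simps)
  have "\<forall>j<N. (\<Sum>i<Suc n. a j i * c' i) = 0"
  proof safe
    fix j assume "j < N"
    then have "(\<Sum>i<n. (a j i - a j n / a jp n * a jp i) * c' i) = 0" using h by (simp only: same)
    then show "(\<Sum>i<Suc n. a j i * c' i) = 0"
      using elimination_residual[where a = a and jp = jp and n = n and c = c', OF piv] pivot_row by simp
  qed
  then have "\<forall>i<Suc n. c' i = 0" by (rule inj)
  then show ?thesis unfolding c'_def by (metis fun_upd_other less_SucI nat_neq_iff)
qed

lemma elimination_bound:
  fixes a :: "nat \<Rightarrow> nat \<Rightarrow> real"
  assumes jp: "jp < N" and piv: "a jp n \<noteq> 0" and K': "K' \<ge> 0"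
    and reduced: "\<And>c. (\<Sum>i<n. \<bar>c i\<bar>) \<le> K' * (\<Sum>j<N. \<bar>\<Sum>i<n. (a j i - a j n / a jp n * a jp i) * c i\<bar>)"
  shows "\<exists>K\<ge>0. \<forall>c. (\<Sum>i<Suc n. \<bar>c i\<bar>) \<le> K * (\<Sum>j<N. \<bar>\<Sum>i<Suc n. a j i * c i\<bar>)"
proof -
  define X where "X = (\<Sum>j<N. \<bar>a j n / a jp n\<bar>)"
  define A where "A = (\<Sum>i<n. \<bar>a jp i\<bar>)"
  define K where "K = K' * (1 + X) + (1 + A * (K' * (1 + X))) / \<bar>a jp n\<bar>"
  have X0: "X \<ge> 0" and A0: "A \<ge> 0" unfolding X_def A_def by (auto intro: sum_nonneg)
  have "K \<ge> 0" unfolding K_def using K' X0 A0 by (auto intro!: add_nonneg_nonneg mult_nonneg_nonneg)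
  moreover have "(\<Sum>i<Suc n. \<bar>c i\<bar>) \<le> K * (\<Sum>j<N. \<bar>\<Sum>i<Suc n. a j i * c i\<bar>)" for c
  proof -
    define R where "R j = (\<Sum>i<Suc n. a j i * c i)" for j
    define S where "S = (\<Sum>j<N. \<bar>R j\<bar>)"
    have RS: "\<bar>R jp\<bar> \<le> S" unfolding S_def using jp by (intro member_le_sum) auto
    have "(\<Sum>j<N. \<bar>\<Sum>i<n. (a j i - a j n / a jp n * a jp i) * c i\<bar>) \<le> (\<Sum>j<N. \<bar>R j\<bar> + \<bar>a j n / a jp n\<bar> * \<bar>R jp\<bar>)"
      unfolding elimination_residual[where a = a and jp = jp and n = n, OF piv] R_def[symmetric]
      by (intro sum_mono) (metis abs_mult abs_triangle_ineq4)
    also have "\<dots> = S + X * \<bar>R jp\<bar>" unfolding S_def X_def by (simp add: sum.distrib sum_distrib_right)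
    also have "\<dots> \<le> (1 + X) * S" using mult_left_mono[OF RS X0] by (simp add: algebra_simps)
    finally have first: "(\<Sum>i<n. \<bar>c i\<bar>) \<le> K' * (1 + X) * S"
      using reduced[of c] K' by (smt (verit, ccfv_threshold) mult.assoc mult_left_mono)
    have "\<bar>\<Sum>i<n. a jp i * c i\<bar> \<le> (\<Sum>i<n. A * \<bar>c i\<bar>)"
      by (rule order_trans[OF sum_abs], rule sum_mono)
        (auto simp: abs_mult A_def intro!: mult_right_mono member_le_sum)
    also have "\<dots> \<le> A * (K' * (1 + X) * S)" using first A0 by (simp add: sum_distrib_left[symmetric] mult_left_mono)
    finally have "\<bar>c n\<bar> \<le> (S + A * (K' * (1 + X) * S)) / \<bar>a jp n\<bar>"
      using RS piv unfolding R_def by (simp add: field_simps abs_le_iff) linarith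
    then have last: "\<bar>c n\<bar> \<le> (1 + A * (K' * (1 + X))) / \<bar>a jp n\<bar> * S" by (simp add: algebra_simps)
    show ?thesis using first last unfolding S_def R_def K_def by (simp add: algebra_simps)
  qed
  ultimately show ?thesis by blast
qed

lemma injective_linear_l1_bound:
  fixes a :: "nat \<Rightarrow> nat \<Rightarrow> real"
  assumes "\<And>c. (\<forall>j<N. (\<Sum>i<n. a j i * c i) = 0) \<Longrightarrow> \<forall>i<n. c i = 0"
  shows "\<exists>K\<ge>0. \<forall>c. (\<Sum>i<n. \<bar>c i\<bar>) \<le> K * (\<Sum>j<N. \<bar>\<Sum>i<n. a j i * c i\<bar>)"
  using assms
proof (induction n arbitrary: a)
  case (Suc n)
  have "\<exists>jp<N. a jp n \<noteq> 0"
  proof (rule ccontr)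
    assume "\<not> (\<exists>jp<N. a jp n \<noteq> 0)"
    then have "\<forall>j<N. (\<Sum>i<Suc n. a j i * (if i = n then 1 else 0)) = 0" by simp
    from Suc.prems[OF this] have "(if n = n then 1 else 0 :: real) = 0" by blast
    then show False by simp
  qed
  then obtain jp where jp: "jp < N" "a jp n \<noteq> 0" by blast
  have "\<And>c. (\<forall>j<N. (\<Sum>i<n. (a j i - a j n / a jp n * a jp i) * c i) = 0) \<Longrightarrow> \<forall>i<n. c i = 0"
    by (rule elimination_injective[where a = a and jp = jp and n = n, OF Suc.prems jp(2)])
  then obtain K' where "K' \<ge> 0"
    "\<And>c. (\<Sum>i<n. \<bar>c i\<bar>) \<le> K' * (\<Sum>j<N. \<bar>\<Sum>i<n. (a j i - a j n / a jp n * a jp i) * c i\<bar>)"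
    using Suc.IH[of "\<lambda>j i. a j i - a j n / a jp n * a jp i"] by blast
  then show ?case by (rule elimination_bound[where a = a and jp = jp and n = n, OF jp])
qed (intro exI[of _ 0], simp)

section \<open>The affine map onto \<open>I\<^sub>n\<close>\<close>

abbreviation Iref :: "real set" where "Iref \<equiv> {-1..1}"

lemma minus_one_less_one: "(-1::real) < 1"
  by simp

lemma Tmap_minus_one [simp]: "Tmap a b (-1) = a"
  and Tmap_one [simp]: "Tmap a b 1 = b"
  unfolding Tmap_def by (simp_all add: field_simps)

lemma Tinv_left: "a < b \<Longrightarrow> Tinv a b a = -1"
  unfolding Tinv_def by (simp add: field_simps)

lemma Tinv_affine: "a < b \<Longrightarrow> Tinv a b t = - (b + a) / (b - a) + 2 / (b - a) * t"
  unfolding Tinv_def by (simp add: diff_divide_distrib add_divide_distrib)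

lemma Tinv_Tmap [simp]: "a < b \<Longrightarrow> Tinv a b (Tmap a b x) = x"
  unfolding Tinv_def Tmap_def by (simp add: field_simps)

lemma Tmap_Tinv [simp]: "a < b \<Longrightarrow> Tmap a b (Tinv a b t) = t"
  unfolding Tinv_def Tmap_def by (simp add: field_simps)

lemma Tmap_in_half_open:
  assumes "a < b" "s \<in> {-1<..1}"
  shows "Tmap a b s \<in> {a<..b}"
proof -
  have "(b - a) * (-1) < (b - a) * s" using assms by (intro mult_strict_left_mono) auto
  moreover have "(b - a) * s \<le> (b - a) * 1" using assms by (intro mult_left_mono) auto
  ultimately show ?thesis unfolding Tmap_def by (auto simp: field_simps)
qed

lemma Tinv_in_half_open: "a < b \<Longrightarrow> t \<in> {a<..b} \<Longrightarrow> Tinv a b t \<in> {-1<..1}"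
  unfolding Tinv_def by (auto simp: field_simps)

lemma Tmap_image_Icc: "{(b + a) / 2 + (b - a) / 2 * -1..(b + a) / 2 + (b - a) / 2 * 1} = {a..b::real}"
  by (simp add: field_simps)

lemma Ck_on_Tmap:
  fixes f :: "real \<Rightarrow> 'a::real_normed_vector"
  assumes "a < b" "Ck_on m {a..b} f"
  shows "Ck_on m {-1..1} (\<lambda>s. f (Tmap a b s))"
  using Ck_on_affine[of "-1" 1 "(b - a) / 2" m "(b + a) / 2" f] assms
  unfolding Tmap_image_Icc Tmap_def by simp

lemma nderiv_Tmap:
  fixes f :: "real \<Rightarrow> 'a::real_normed_vector"
  assumes "a < b" "Ck_on m {a..b} f" "j \<le> m" "s \<in> {-1..1}"
  shows "nderiv j {-1..1} (\<lambda>s. f (Tmap a b s)) s = ((b - a) / 2) ^ j *\<^sub>R nderiv j {a..b} f (Tmap a b s)"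
  using nderiv_affine[of "-1" 1 "(b - a) / 2" m "(b + a) / 2" f j s] assms
  unfolding Tmap_image_Icc Tmap_def by simp

lemma Ck_on_Tmap_component:
  fixes f :: "real \<Rightarrow> real ^ 'd"
  assumes "a < b" "Ck_on m {a..b} f"
  shows "Ck_on m {-1..1} (\<lambda>s. f (Tmap a b s) $ c)"
  by (rule Ck_on_linear[OF bounded_linear_vec_nth minus_one_less_one Ck_on_Tmap[OF assms]])

lemma nderiv_Tmap_component:
  fixes f :: "real \<Rightarrow> real ^ 'd"
  assumes "a < b" "Ck_on m {a..b} f" "j \<le> m" "s \<in> {-1..1}"
  shows "nderiv j {-1..1} (\<lambda>s. f (Tmap a b s) $ c) s = ((b - a) / 2) ^ j * nderiv j {a..b} f (Tmap a b s) $ c"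
  using nderiv_linear[OF bounded_linear_vec_nth minus_one_less_one Ck_on_Tmap[OF assms(1,2)] assms(3,4)]
    nderiv_Tmap[OF assms] by simp

lemma supn_Tmap_component_le:
  fixes f :: "real \<Rightarrow> real ^ 'd"
  assumes ab: "a < b" and f: "Ck_on m {a..b} f" and j: "j \<le> m"
  shows "supn j {-1..1} (\<lambda>s. f (Tmap a b s) $ c) {-1<..1} \<le> ((b - a) / 2) ^ j * supn j {a..b} f {a<..b}"
proof (rule supn_le)
  fix s :: real assume s: "s \<in> {-1<..1}"
  have "norm (nderiv j {-1..1} (\<lambda>s. f (Tmap a b s) $ c) s) \<le> ((b - a) / 2) ^ j * norm (nderiv j {a..b} f (Tmap a b s))"
    using nderiv_Tmap_component[OF ab f j, of s c] s ab component_le_norm_cart[of "nderiv j {a..b} f (Tmap a b s)" c]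
    by (auto simp: abs_mult intro: mult_left_mono)
  also have "\<dots> \<le> ((b - a) / 2) ^ j * supn j {a..b} f {a<..b}"
    using ab Tmap_in_half_open[OF ab s] by (intro mult_left_mono norm_nderiv_le_supn[OF f j]) auto
  finally show "norm (nderiv j {-1..1} (\<lambda>s. f (Tmap a b s) $ c) s) \<le> ((b - a) / 2) ^ j * supn j {a..b} f {a<..b}" .
qed simp

lemma Ck_on_VPdeg:
  assumes "x < y" "p \<in> VPdeg s"
  shows "Ck_on m {x..y} p"
proof -
  obtain c where p: "p = (\<lambda>t. \<Sum>i<nat (s + 1). t ^ i *\<^sub>R c i)" using assms(2) unfolding VPdeg_def by blast
  show ?thesis unfolding p
    by (intro Ck_on_sum[OF assms(1)] Ck_on_linear[OF bounded_linear_scaleR_left assms(1) Ck_on_power[OF assms(1)]])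
qed

lemma VPdeg_Tmap_component:
  assumes "p \<in> VPdeg (int r)"
  obtains c' where "(\<lambda>s. p (Tmap a b s) $ c) = (\<lambda>s. \<Sum>i<Suc r. c' i * s ^ i)"
proof -
  have r: "nat (int r + 1) = Suc r" by simp
  obtain cc where p: "p = (\<lambda>t. \<Sum>i<Suc r. t ^ i *\<^sub>R cc i)"
    using assms unfolding VPdeg_def r by blast
  have "(\<lambda>t. \<Sum>i<Suc r. cc i $ c * t ^ i) \<in> Pdeg (int r)"
    unfolding Pdeg_def r by (intro CollectI exI[of _ "\<lambda>i. cc i $ c"]) (rule refl)
  from Pdeg_affine[OF this, of "(b + a) / 2" "(b - a) / 2"]
  have "(\<lambda>s. p (Tmap a b s) $ c) \<in> Pdeg (int r)"
    unfolding p Tmap_def by (simp add: mult.commute)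
  then show ?thesis using that unfolding Pdeg_def r by blast
qed

lemma axis_test_in_VPdeg:
  assumes "\<psi> \<in> Pdeg s"
  shows "(\<lambda>t. \<psi> t *\<^sub>R axis c (1::real)) \<in> VPdeg s"
proof -
  obtain d where "\<psi> = (\<lambda>t. \<Sum>i<nat (s + 1). d i * t ^ i)" using assms unfolding Pdeg_def by blast
  then have "(\<lambda>t. \<psi> t *\<^sub>R axis c 1) = (\<lambda>t. \<Sum>i<nat (s + 1). t ^ i *\<^sub>R (d i *\<^sub>R axis c 1))"
    by (simp add: scaleR_sum_left mult.commute)
  then show ?thesis unfolding VPdeg_def by (intro CollectI exI[of _ "\<lambda>i. d i *\<^sub>R axis c 1"])
qed

lemma locI_axis_test:
  assumes "a < b"
  shows "locI Ih a b (\<lambda>t. inner (g t) ((Tinv a b t) ^ m *\<^sub>R axis c 1))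
    = (b - a) / 2 * Ih (\<lambda>s. s ^ m * g (Tmap a b s) $ c)"
  unfolding locI_def using assms by (simp add: inner_axis mult.commute)

lemma locI_reference [simp]: "locI Ih (-1) 1 f = Ih f"
  unfolding locI_def Tmap_def by simp

lemma locOpS_reference [simp]: "locOpS Iop (-1) 1 \<phi> = Iop \<phi>"
  unfolding locOpS_def Tmap_def Tinv_def by (rule ext) simp

lemma exact_for_reference_iff:
  "exact_for Ih Iop (-1) 1 s i \<longleftrightarrow> (\<forall>\<phi>\<in>Pdeg s. \<forall>\<psi>\<in>Pdeg i. Ih (\<lambda>t. \<phi> t * \<psi> t) = Ih (\<lambda>t. Iop \<phi> t * \<psi> t))"
  unfolding exact_for_def by simp

lemma exact_for_affine_iff:
  assumes ab: "a < b"
  shows "exact_for Ih Iop a b s i \<longleftrightarrow> exact_for Ih Iop (-1) 1 s i"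
proof -
  have pull: "exact_for Ih Iop a b s i \<longleftrightarrow> (\<forall>\<phi>\<in>Pdeg s. \<forall>\<psi>\<in>Pdeg i.
      Ih (\<lambda>x. \<phi> (Tmap a b x) * \<psi> (Tmap a b x)) = Ih (\<lambda>x. Iop (\<lambda>y. \<phi> (Tmap a b y)) x * \<psi> (Tmap a b x)))"
    unfolding exact_for_def locI_def locOpS_def using ab by simp
  have T: "\<phi> \<in> Pdeg s' \<Longrightarrow> (\<lambda>x. \<phi> (Tmap a b x)) \<in> Pdeg s'" for \<phi> s'
    unfolding Tmap_def by (rule Pdeg_affine)
  have Tinv: "\<phi> \<in> Pdeg s' \<Longrightarrow> (\<lambda>x. \<phi> (Tinv a b x)) \<in> Pdeg s'" for \<phi> s'
    unfolding Tinv_affine[OF ab] by (rule Pdeg_affine)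
  show ?thesis unfolding pull exact_for_reference_iff
  proof (intro iffI ballI)
    fix \<phi> \<psi> assume H: "\<forall>\<phi>\<in>Pdeg s. \<forall>\<psi>\<in>Pdeg i. Ih (\<lambda>x. \<phi> (Tmap a b x) * \<psi> (Tmap a b x))
        = Ih (\<lambda>x. Iop (\<lambda>y. \<phi> (Tmap a b y)) x * \<psi> (Tmap a b x))" and "\<phi> \<in> Pdeg s" "\<psi> \<in> Pdeg i"
    from H[rule_format, OF Tinv[OF this(2)] Tinv[OF this(3)]]
    show "Ih (\<lambda>t. \<phi> t * \<psi> t) = Ih (\<lambda>t. Iop \<phi> t * \<psi> t)" using ab by simp
  next
    fix \<phi> \<psi> assume H: "\<forall>\<phi>\<in>Pdeg s. \<forall>\<psi>\<in>Pdeg i. Ih (\<lambda>t. \<phi> t * \<psi> t) = Ih (\<lambda>t. Iop \<phi> t * \<psi> t)"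
      and "\<phi> \<in> Pdeg s" "\<psi> \<in> Pdeg i"
    from H[rule_format, OF T[OF this(2)] T[OF this(3)]]
    show "Ih (\<lambda>x. \<phi> (Tmap a b x) * \<psi> (Tmap a b x)) = Ih (\<lambda>x. Iop (\<lambda>y. \<phi> (Tmap a b y)) x * \<psi> (Tmap a b x))" .
  qed
qed

lemma jmin_affine_invariant:
  assumes "a < b"
  shows "jmin Ih Iop a b r k rc = jmin Ih Iop (-1) 1 r k rc"
  unfolding jmin_def rII_def exact_for_affine_iff[OF assms] ..

lemma jmin_le_Suc: "jmin Ih Iop a b r k rc \<le> Suc r"
  unfolding jmin_def Let_def by auto

lemma exact_for_mono: "s \<le> s' \<Longrightarrow> exact_for Ih Iop a b s' i \<Longrightarrow> exact_for Ih Iop a b s i"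
  unfolding exact_for_def using Pdeg_mono by blast

lemma Sup_ereal_of_int_infinite:
  fixes T :: "int set"
  assumes "Sup (ereal ` real_of_int ` T) = \<infinity>"
  shows "\<exists>s\<in>T. x \<le> s"
proof (rule ccontr)
  assume "\<not> (\<exists>s\<in>T. x \<le> s)"
  then have "Sup (ereal ` real_of_int ` T) \<le> ereal (real_of_int x)"
    by (intro Sup_least) auto
  then show False using assms by simp
qed

lemma Sup_ereal_of_int_attained:
  fixes T :: "int set"
  assumes x: "x \<in> T" and lo: "\<And>s. s \<in> T \<Longrightarrow> lo \<le> s" and fin: "Sup (ereal ` real_of_int ` T) \<noteq> \<infinity>"
  shows "\<exists>m\<in>T. Sup (ereal ` real_of_int ` T) = ereal (real_of_int m)"
proof -
  let ?S = "Sup (ereal ` real_of_int ` T)"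
  have upper: "ereal (real_of_int s) \<le> ?S" if "s \<in> T" for s
    using that by (auto intro: Sup_upper)
  obtain R where R: "?S = ereal R" using fin upper[OF x] by (cases ?S) auto
  have "T \<subseteq> {lo..\<lfloor>R\<rfloor>}" using upper lo unfolding R by (auto simp: le_floor_iff)
  then have "finite T" by (rule finite_subset) simp
  then have "Max T \<in> T" "\<forall>s\<in>T. s \<le> Max T" using x by (auto intro: Max_in)
  moreover have "?S \<le> ereal (real_of_int (Max T))"
    using calculation(2) by (intro Sup_least) auto
  ultimately show ?thesis using upper by (intro bexI[of _ "Max T"] antisym) auto
qed

section \<open>Taylor approximation on the reference interval\<close>

lemma abs_nderiv_monomial_sum_le:
  assumes t: "t \<in> Iref"
  shows "\<bar>nderiv l Iref (\<lambda>t. \<Sum>i<Suc r. c i * t ^ i) t\<bar> \<le> real r ^ l * (\<Sum>i<Suc r. \<bar>c i\<bar>)"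
proof -
  have "\<bar>t\<bar> \<le> 1" using t by auto
  have ck: "Ck_on l Iref (\<lambda>t. c i * t ^ i)" for i
    by (rule Ck_on_linear[OF bounded_linear_mult_right minus_one_less_one Ck_on_power[OF minus_one_less_one]])
  have "nderiv l Iref (\<lambda>t. \<Sum>i<Suc r. c i * t ^ i) t = (\<Sum>i<Suc r. nderiv l Iref (\<lambda>t. c i * t ^ i) t)"
    by (rule nderiv_sum[OF minus_one_less_one ck order_refl t])
  also have "\<dots> = (\<Sum>i<Suc r. c i * nderiv l Iref (\<lambda>t. t ^ i) t)"
    by (intro sum.cong refl nderiv_linear[OF bounded_linear_mult_right minus_one_less_one
          Ck_on_power[OF minus_one_less_one] order_refl t])
  also have "\<bar>\<dots>\<bar> \<le> (\<Sum>i<Suc r. \<bar>c i\<bar> * real r ^ l)"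
  proof (rule order_trans[OF sum_abs sum_mono])
    fix i assume "i \<in> {..<Suc r}"
    then have "\<bar>nderiv l Iref (\<lambda>t. t ^ i) t\<bar> \<le> real r ^ l"
      using t abs_poly_funpow_pderiv_monom_le[OF \<open>\<bar>t\<bar> \<le> 1\<close>, of l i]
      by (auto simp: poly_monom_one nderiv_poly intro: order_trans[OF _ power_mono])
    then show "\<bar>c i * nderiv l Iref (\<lambda>t. t ^ i) t\<bar> \<le> \<bar>c i\<bar> * real r ^ l"
      by (simp add: abs_mult mult_left_mono)
  qed
  also have "\<dots> = real r ^ l * (\<Sum>i<Suc r. \<bar>c i\<bar>)"
    by (subst sum_distrib_right[symmetric]) (rule mult.commute)
  finally show ?thesis .
qed

definition taylor_poly :: "nat \<Rightarrow> (real \<Rightarrow> real) \<Rightarrow> real poly" where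
  "taylor_poly n f = (\<Sum>i<n. monom (nderiv i Iref f 0 / fact i) i)"

lemma taylor_poly_degree: "taylor_poly n f = 0 \<or> degree (taylor_poly n f) < n"
proof (cases n)
  case (Suc n')
  have "degree (taylor_poly n f) \<le> n'"
    by (rule degree_le) (auto simp: taylor_poly_def coeff_sum_monom Suc)
  then show ?thesis using Suc by simp
qed (simp add: taylor_poly_def)

lemma poly_taylor_poly_eq_sum:
  assumes "n \<le> Suc r"
  shows "poly (taylor_poly n f) = (\<lambda>t. \<Sum>i<Suc r. coeff (taylor_poly n f) i * t ^ i)"
proof -
  have "degree (taylor_poly n f) < Suc r" using taylor_poly_degree[of n f] assms by auto
  then show ?thesis by (intro ext poly_eq_sum_coeff)
qed

lemma poly_funpow_pderiv_at_0: "poly ((pderiv ^^ j) q) 0 = fact j * coeff q j"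
  by (simp add: poly_0_coeff_0 coeff_higher_pderiv pochhammer_fact)

lemma nderiv_taylor_poly_at_0:
  "j < n \<Longrightarrow> nderiv j Iref (poly (taylor_poly n f)) 0 = nderiv j Iref f 0"
  by (simp add: nderiv_poly poly_funpow_pderiv_at_0 taylor_poly_def coeff_sum_monom)

lemma nderiv_taylor_poly_high:
  assumes "n \<le> j" "s \<in> Iref"
  shows "nderiv j Iref (poly (taylor_poly n f)) s = 0"
proof -
  have "coeff ((pderiv ^^ j) (taylor_poly n f)) i = 0" for i
    using assms by (simp add: coeff_higher_pderiv taylor_poly_def coeff_sum_monom)
  then have "(pderiv ^^ j) (taylor_poly n f) = 0" by (simp add: poly_eq_iff)
  then show ?thesis using assms by (simp add: nderiv_poly)
qed

lemma abs_nderiv_le_supn_Suc: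
  fixes g :: "real \<Rightarrow> real"
  assumes g: "Ck_on m Iref g" and j: "j < m" and z: "nderiv j Iref g 0 = 0" and t: "t \<in> Iref"
  shows "\<bar>nderiv j Iref g t\<bar> \<le> supn (Suc j) Iref g Iref"
proof -
  have "norm (nderiv j Iref g t - nderiv j Iref g 0) \<le> supn (Suc j) Iref g Iref * norm (t - 0)"
  proof (rule field_differentiable_bound[where S = Iref])
    show "\<And>z. z \<in> Iref \<Longrightarrow> (nderiv j Iref g has_field_derivative nderiv (Suc j) Iref g z) (at z within Iref)"
      using Ck_on_has_vector_derivative[OF g j] by (simp add: has_real_derivative_iff_has_vector_derivative)
    show "\<And>z. z \<in> Iref \<Longrightarrow> norm (nderiv (Suc j) Iref g z) \<le> supn (Suc j) Iref g Iref"
      by (rule norm_nderiv_le_supn[OF g]) (use j in auto)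
  qed (use t in auto)
  also have "\<dots> \<le> supn (Suc j) Iref g Iref"
    using t supn_nonneg[OF g, of "Suc j" Iref] j by (intro mult_left_le) auto
  finally show ?thesis using z by simp
qed

lemma taylor_remainder_bound:
  fixes f :: "real \<Rightarrow> real"
  assumes f: "Ck_on M Iref f" and n: "n \<le> M" and j: "j \<le> M" and s: "s \<in> Iref"
  shows "\<bar>nderiv j Iref (\<lambda>t. f t - poly (taylor_poly n f) t) s\<bar> \<le> (\<Sum>i=n..M. supn i Iref f {-1<..1})"
proof -
  define W where "W t = f t - poly (taylor_poly n f) t" for t
  have cW: "Ck_on M Iref W" unfolding W_def by (rule Ck_on_diff[OF minus_one_less_one f Ck_on_poly[OF minus_one_less_one]])
  have ndW: "nderiv i Iref W t = nderiv i Iref f t - nderiv i Iref (poly (taylor_poly n f)) t"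
    if "i \<le> M" "t \<in> Iref" for i t
    unfolding W_def by (rule nderiv_diff[OF minus_one_less_one f Ck_on_poly[OF minus_one_less_one] that])
  have sup_nonneg: "0 \<le> supn i Iref f {-1<..1}" if "i \<le> M" for i
    by (rule supn_nonneg[OF f that]) auto
  have high: "\<bar>nderiv i Iref W t\<bar> \<le> supn i Iref f {-1<..1}" if "n \<le> i" "i \<le> M" "t \<in> Iref" for i t
    using ndW[OF that(2,3)] nderiv_taylor_poly_high[OF that(1,3)]
      norm_nderiv_le_supn_open[OF minus_one_less_one f that(2,3)] by simp
  have low: "\<bar>nderiv (n - d) Iref W t\<bar> \<le> supn n Iref f {-1<..1}" if "d \<le> n" "t \<in> Iref" for d t
    using that
  proof (induction d arbitrary: t)
    case (Suc d)
    have "nderiv (n - Suc d) Iref W 0 = 0"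
      using ndW[of "n - Suc d" 0] Suc.prems n nderiv_taylor_poly_at_0[of "n - Suc d" n f] by simp
    then have "\<bar>nderiv (n - Suc d) Iref W t\<bar> \<le> supn (Suc (n - Suc d)) Iref W Iref"
      by (intro abs_nderiv_le_supn_Suc[OF cW _ _ Suc.prems(2)]) (use Suc.prems n in auto)
    also have "\<dots> \<le> supn n Iref f {-1<..1}"
      by (rule supn_le) (use Suc.IH Suc.prems in \<open>auto simp: Suc_diff_Suc\<close>)
    finally show ?case .
  qed (use high n in simp)
  have "\<bar>nderiv j Iref W s\<bar> \<le> supn (max j n) Iref f {-1<..1}"
  proof (cases "j \<le> n")
    case True
    then show ?thesis using low[of "n - j" s] s by (simp add: max_def)
  qed (use high j s in simp)
  also have "\<dots> \<le> (\<Sum>i=n..M. supn i Iref f {-1<..1})"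
    using j n sup_nonneg by (intro member_le_sum) auto
  finally show ?thesis unfolding W_def .
qed

section \<open>Reference-interval operators\<close>

text \<open>The hypotheses of the theorem on the reference interval, with (A2) and (A3) for scalar
  functions and nonnegative constants; \<open>M\<close> is the order of regularity used throughout.\<close>

locale reference_operators =
  fixes r k kI kIop M :: nat and C0 C1 :: real
    and Ih :: "(real \<Rightarrow> real) \<Rightarrow> real"
    and Iop :: "(real \<Rightarrow> real) \<Rightarrow> (real \<Rightarrow> real)"
  assumes k_le_r: "k \<le> r"
    and M_large: "k div 2 \<le> M" "kI < M" "kIop < M"
    and lin_Ih: "\<And>f g c. Ck_on kI Iref f \<Longrightarrow> Ck_on kI Iref g \<Longrightarrow>
        Ih (\<lambda>t. f t + g t) = Ih f + Ih g \<and> Ih (\<lambda>t. c * f t) = c * Ih f"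
    and lin_Iop: "\<And>f g c. Ck_on kIop Iref f \<Longrightarrow> Ck_on kIop Iref g \<Longrightarrow>
        (\<forall>t\<in>Iref. Iop (\<lambda>s. f s + g s) t = Iop f t + Iop g t \<and> Iop (\<lambda>s. c * f s) t = c * Iop f t)"
    and reg_Iop: "\<And>m f. Ck_on (max kIop m) Iref f \<Longrightarrow> Ck_on m Iref (Iop f)"
    and unisolvence: "\<And>\<psi>. \<psi> \<in> Pdeg (int r - int (max 1 k)) \<Longrightarrow>
        (\<forall>\<phi>\<in>Pdeg (int r - int (max 1 k)).
           Ih (\<lambda>t. (1 - t) ^ (k div 2) * (1 + t) ^ nat \<bar>(int k - 1) div 2\<bar> * \<psi> t * \<phi> t) = 0)
        \<Longrightarrow> \<psi> = (\<lambda>_. 0)"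
    and Ih_bound: "\<And>g. Ck_on kI Iref g \<Longrightarrow> \<bar>Ih g\<bar> \<le> C0 * (\<Sum>j\<le>kI. supn j Iref g Iref)"
    and Iop_bound: "\<And>m g. m \<le> kI \<Longrightarrow> Ck_on (max kIop m) Iref g \<Longrightarrow>
        supn m Iref (Iop g) Iref \<le> C1 * (\<Sum>j\<le>max kIop m. supn j Iref g Iref)"
    and C0_nonneg: "0 \<le> C0" and C1_nonneg: "0 \<le> C1"
begin

lemma Ih_scale: "Ck_on kI Iref f \<Longrightarrow> Ih (\<lambda>t. c * f t) = c * Ih f"
  using lin_Ih by blast

lemma Ih_zero: "Ih (\<lambda>t. 0) = 0"
  using Ih_scale[OF Ck_on_const[OF minus_one_less_one], of 0 0] by simp

lemma Ih_diff:
  assumes f: "Ck_on kI Iref f" and g: "Ck_on kI Iref g"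
  shows "Ih (\<lambda>t. f t - g t) = Ih f - Ih g"
proof -
  have "Ck_on kI Iref (\<lambda>t. (-1) * g t)"
    using Ck_on_linear[OF bounded_linear_mult_right minus_one_less_one g] .
  then have "Ih (\<lambda>t. f t + (-1) * g t) = Ih f + Ih (\<lambda>t. (-1) * g t)"
    using lin_Ih[OF f] by blast
  also have "Ih (\<lambda>t. (-1) * g t) = (-1) * Ih g" by (rule Ih_scale[OF g])
  finally show ?thesis by simp
qed

lemma Ih_sum:
  assumes "\<And>i. i \<in> A \<Longrightarrow> Ck_on kI Iref (f i)"
  shows "Ih (\<lambda>t. \<Sum>i\<in>A. c i * f i t) = (\<Sum>i\<in>A. c i * Ih (f i))"
  using assms
proof (induction A rule: infinite_finite_induct)
  case (insert a A)
  have "Ck_on kI Iref (\<lambda>t. c i * f i t)" if "i \<in> insert a A" for i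
    using Ck_on_linear[OF bounded_linear_mult_right minus_one_less_one insert.prems[OF that]] .
  then have "Ih (\<lambda>t. c a * f a t + (\<Sum>i\<in>A. c i * f i t)) = Ih (\<lambda>t. c a * f a t) + Ih (\<lambda>t. \<Sum>i\<in>A. c i * f i t)"
    by (intro lin_Ih[THEN conjunct1] Ck_on_sum[OF minus_one_less_one]) auto
  then show ?case using insert by (simp add: Ih_scale)
qed (simp_all add: Ih_zero)

lemma supn_diff_eq_on_Iref:
  assumes "\<And>t. t \<in> Iref \<Longrightarrow> f t = g t"
  shows "supn j Iref (\<lambda>t. f t - g t) Iref \<le> (0::real)"
proof (rule supn_le)
  fix t :: real assume t: "t \<in> Iref"
  have "nderiv j Iref (\<lambda>t. f t - g t) t = nderiv j Iref (\<lambda>t. 0) t"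
    by (rule nderiv_cong[OF _ t]) (simp add: assms)
  then show "norm (nderiv j Iref (\<lambda>t. f t - g t) t) \<le> 0"
    using t by (simp add: nderiv_const)
qed simp

text \<open>(A2) and (A3) make \<open>Ih\<close> and \<open>Iop\<close> local: they only see the values on the reference interval.\<close>

lemma Ih_cong:
  assumes f: "Ck_on kI Iref f" and g: "Ck_on kI Iref g" and eq: "\<And>t. t \<in> Iref \<Longrightarrow> f t = g t"
  shows "Ih f = Ih g"
proof -
  have "\<bar>Ih (\<lambda>t. f t - g t)\<bar> \<le> C0 * (\<Sum>j\<le>kI. supn j Iref (\<lambda>t. f t - g t) Iref)"
    by (rule Ih_bound[OF Ck_on_diff[OF minus_one_less_one f g]])
  also have "\<dots> \<le> C0 * (\<Sum>j\<le>kI. 0)"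
    by (intro mult_left_mono sum_mono supn_diff_eq_on_Iref C0_nonneg eq)
  finally show ?thesis using Ih_diff[OF f g] by simp
qed

lemma Iop_scale: "Ck_on kIop Iref f \<Longrightarrow> t \<in> Iref \<Longrightarrow> Iop (\<lambda>s. c * f s) t = c * Iop f t"
  using lin_Iop by blast

lemma Iop_diff:
  assumes f: "Ck_on kIop Iref f" and g: "Ck_on kIop Iref g" and t: "t \<in> Iref"
  shows "Iop (\<lambda>s. f s - g s) t = Iop f t - Iop g t"
proof -
  have "Ck_on kIop Iref (\<lambda>t. (-1) * g t)"
    using Ck_on_linear[OF bounded_linear_mult_right minus_one_less_one g] .
  then have "Iop (\<lambda>s. f s + (-1) * g s) t = Iop f t + Iop (\<lambda>s. (-1) * g s) t"
    using lin_Iop[OF f] t by blast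
  also have "Iop (\<lambda>s. (-1) * g s) t = (-1) * Iop g t" by (rule Iop_scale[OF g t])
  finally show ?thesis by simp
qed

lemma Iop_cong:
  assumes f: "Ck_on kIop Iref f" and g: "Ck_on kIop Iref g" and eq: "\<And>t. t \<in> Iref \<Longrightarrow> f t = g t"
    and t: "t \<in> Iref"
  shows "Iop f t = Iop g t"
proof -
  have fg: "Ck_on (max kIop 0) Iref (\<lambda>t. f t - g t)"
    using Ck_on_diff[OF minus_one_less_one f g] by simp
  have "\<bar>Iop (\<lambda>t. f t - g t) t\<bar> \<le> supn 0 Iref (Iop (\<lambda>t. f t - g t)) Iref"
    using norm_nderiv_le_supn[OF reg_Iop[OF fg] order_refl order_refl t] by simp
  also have "\<dots> \<le> C1 * (\<Sum>j\<le>kIop. supn j Iref (\<lambda>t. f t - g t) Iref)"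
    using Iop_bound[OF _ fg] by simp
  also have "\<dots> \<le> C1 * (\<Sum>j\<le>kIop. 0)"
    by (intro mult_left_mono sum_mono supn_diff_eq_on_Iref C1_nonneg eq)
  finally show ?thesis using Iop_diff[OF f g t] by simp
qed

definition nL :: nat where "nL = (if k = 0 then 0 else (k - 1) div 2 + 1)"
definition nR :: nat where "nR = k div 2"
definition nM :: nat where "nM = r - k + 1"
definition ndofs :: nat where "ndofs = nL + nR + nM"

text \<open>The defining conditions of \<open>\<J>\<^sub>n\<close>, pulled back to the reference interval and numbered:
  \<open>nL\<close> derivatives at \<open>-1\<close>, \<open>nR\<close> derivatives at \<open>1\<close>, and \<open>nM\<close> moments, i.e.\ the variational
  condition tested with \<open>\<phi>(t) = t\<^sup>m\<close>. The polynomial side uses \<open>p'\<close> (\<open>L = id\<close>), the data side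
  \<open>Iop v'\<close> (\<open>L = Iop\<close>), so \<open>p = \<J>\<^sub>n v\<close> becomes \<open>dof id p = dof Iop v\<close>.\<close>

definition dof :: "((real \<Rightarrow> real) \<Rightarrow> real \<Rightarrow> real) \<Rightarrow> (real \<Rightarrow> real) \<Rightarrow> nat \<Rightarrow> real" where
  "dof L f j = (if j < nL then nderiv j Iref f (-1)
     else if j < nL + nR then nderiv (j - nL + 1) Iref f 1
     else Ih (\<lambda>s. s ^ (j - nL - nR) * L (nderiv 1 Iref f) s)
       + (if k = 0 then f (-1) * (-1) ^ (j - nL - nR) else 0))"

lemma dof_index_cases:
  obtains (left) "j < nL" "1 \<le> k" "j \<le> (k - 1) div 2"
  | (right) i where "1 \<le> i" "i \<le> k div 2" "j = nL + i - 1"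
  | (moment) m where "j = nL + nR + m"
proof -
  consider "j < nL" | "nL \<le> j" "j < nL + nR" | "nL + nR \<le> j" by linarith
  then show ?thesis
  proof cases
    case 1
    then show ?thesis using left unfolding nL_def by (cases "k = 0") auto
  next
    case 2
    then show ?thesis using right[of "j - nL + 1"] unfolding nR_def by auto
  next
    case 3
    then show ?thesis using moment[of "j - nL - nR"] by auto
  qed
qed

lemma dof_left: "j < nL \<Longrightarrow> dof L f j = nderiv j Iref f (-1)"
  unfolding dof_def by simp

lemma dof_right:
  assumes "1 \<le> i" "i \<le> k div 2"
  shows "dof L f (nL + i - 1) = nderiv i Iref f 1"
proof -
  have "\<not> nL + i - 1 < nL" "nL + i - 1 < nL + nR" "nL + i - 1 - nL + 1 = i"
    using assms unfolding nR_def by auto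
  then show ?thesis unfolding dof_def by presburger
qed

lemma dof_moment: "dof L f (nL + nR + m)
    = Ih (\<lambda>s. s ^ m * L (nderiv 1 Iref f) s) + (if k = 0 then f (-1) * (-1) ^ m else 0)"
  unfolding dof_def by simp

lemma moment_index_bound: "nL + nR + m < ndofs \<Longrightarrow> m \<le> r - k"
  unfolding ndofs_def nM_def by simp

lemma Ck_kIop_nderiv1: "Ck_on M Iref f \<Longrightarrow> Ck_on (max kIop kI) Iref (nderiv 1 Iref f)"
  by (rule Ck_on_nderiv1) (use M_large in auto)

lemma Ck_moment: "Ck_on M Iref f \<Longrightarrow> Ck_on kI Iref (\<lambda>s. s ^ m * nderiv 1 Iref f s)"
  by (rule Ck_on_mult[OF minus_one_less_one Ck_on_power Ck_on_mono[OF Ck_kIop_nderiv1]]) auto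

lemma Ck_moment_Iop: "Ck_on M Iref f \<Longrightarrow> Ck_on kI Iref (\<lambda>s. s ^ m * Iop (nderiv 1 Iref f) s)"
  by (intro Ck_on_mult[OF minus_one_less_one Ck_on_power] reg_Iop Ck_kIop_nderiv1) auto

lemma dof_id_sum:
  assumes fin: "finite A" and f: "\<And>i. i \<in> A \<Longrightarrow> Ck_on M Iref (f i)"
  shows "dof id (\<lambda>t. \<Sum>i\<in>A. c i * f i t) j = (\<Sum>i\<in>A. c i * dof id (f i) j)"
proof -
  let ?F = "\<lambda>t. \<Sum>i\<in>A. c i * f i t"
  have cf: "Ck_on M Iref (\<lambda>t. c i * f i t)" if "i \<in> A" for i
    using Ck_on_linear[OF bounded_linear_mult_right minus_one_less_one f[OF that]] .
  have nd: "nderiv j' Iref ?F t = (\<Sum>i\<in>A. c i * nderiv j' Iref (f i) t)" if "j' \<le> M" "t \<in> Iref" for j' t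
  proof -
    have "nderiv j' Iref ?F t = (\<Sum>i\<in>A. nderiv j' Iref (\<lambda>t. c i * f i t) t)"
      by (rule nderiv_sum[OF minus_one_less_one cf that])
    also have "\<dots> = (\<Sum>i\<in>A. c i * nderiv j' Iref (f i) t)"
      by (rule sum.cong[OF refl], rule nderiv_linear[OF bounded_linear_mult_right minus_one_less_one f])
        (use that in auto)
    finally show ?thesis .
  qed
  have M1: "1 \<le> M" using M_large by simp
  show ?thesis
  proof (cases j rule: dof_index_cases)
    case left
    then show ?thesis using M_large nd[of j "-1"] by (simp add: dof_left sum_distrib_left)
  next
    case (right i)
    then show ?thesis using M_large nd[of i 1] unfolding right(3) dof_right[OF right(1,2)] by simp
  next
    case (moment m)
    have cm: "Ck_on kI Iref (\<lambda>s. s ^ m * nderiv 1 Iref (f i) s)" if "i \<in> A" for i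
      by (rule Ck_moment[OF f[OF that]])
    have "Ih (\<lambda>s. s ^ m * nderiv 1 Iref ?F s) = Ih (\<lambda>s. \<Sum>i\<in>A. c i * (s ^ m * nderiv 1 Iref (f i) s))"
      by (rule Ih_cong[OF Ck_moment[OF Ck_on_sum[OF minus_one_less_one cf]]
            Ck_on_sum[OF minus_one_less_one Ck_on_linear[OF bounded_linear_mult_right minus_one_less_one cm]]])
        (use nd[OF M1] in \<open>simp_all add: sum_distrib_left algebra_simps\<close>)
    also have "\<dots> = (\<Sum>i\<in>A. c i * Ih (\<lambda>s. s ^ m * nderiv 1 Iref (f i) s))"
      by (rule Ih_sum[OF cm])
    finally show ?thesis unfolding moment dof_moment
      by (cases "k = 0") (simp_all add: sum.distrib sum_distrib_left sum_distrib_right algebra_simps)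
  qed
qed

lemma dof_id_poly_moment:
  "dof id (poly q) (nL + nR + m) = Ih (\<lambda>s. s ^ m * poly (pderiv q) s) + (if k = 0 then poly q (-1) * (-1) ^ m else 0)"
proof -
  have "Ih (\<lambda>s. s ^ m * nderiv 1 Iref (poly q) s) = Ih (\<lambda>s. s ^ m * poly (pderiv q) s)"
    by (rule Ih_cong[OF Ck_moment[OF Ck_on_poly] Ck_on_mult[OF minus_one_less_one Ck_on_power Ck_on_poly]])
      (simp_all add: nderiv_poly)
  then show ?thesis unfolding dof_moment by simp
qed

lemma dof_Iop_poly_moment:
  "dof Iop (poly q) (nL + nR + m) = Ih (\<lambda>s. s ^ m * Iop (poly (pderiv q)) s) + (if k = 0 then poly q (-1) * (-1) ^ m else 0)"
proof -
  have "Iop (nderiv 1 Iref (poly q)) s = Iop (poly (pderiv q)) s" if "s \<in> Iref" for s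
    by (rule Iop_cong[OF Ck_on_mono[OF Ck_kIop_nderiv1] Ck_on_poly _ that]) (auto simp: Ck_on_poly nderiv_poly)
  then have "Ih (\<lambda>s. s ^ m * Iop (nderiv 1 Iref (poly q)) s) = Ih (\<lambda>s. s ^ m * Iop (poly (pderiv q)) s)"
    by (intro Ih_cong Ck_moment_Iop Ck_on_poly Ck_on_mult[OF minus_one_less_one Ck_on_power] reg_Iop) auto
  then show ?thesis unfolding dof_moment by simp
qed

lemma dofs_vanish_test:
  assumes z: "\<forall>j<ndofs. dof id (poly q) j = 0" and df: "degree f \<le> r - k"
  shows "Ih (\<lambda>s. poly f s * poly (pderiv q) s) + (if k = 0 then poly q (-1) * poly f (-1) else 0) = 0"
proof -
  have dfn: "degree f < nM" using df unfolding nM_def by simp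
  have zm: "Ih (\<lambda>s. s ^ m * poly (pderiv q) s) + (if k = 0 then poly q (-1) * (-1) ^ m else 0) = 0"
    if "m < nM" for m
    using z[rule_format, of "nL + nR + m"] that unfolding ndofs_def dof_id_poly_moment by simp
  have cm: "\<And>m. m \<in> {..<nM} \<Longrightarrow> Ck_on kI Iref (\<lambda>s. s ^ m * poly (pderiv q) s)"
    by (rule Ck_on_mult[OF minus_one_less_one Ck_on_power[OF minus_one_less_one] Ck_on_poly[OF minus_one_less_one]])
  have "(\<lambda>s. poly f s * poly (pderiv q) s) = (\<lambda>s. \<Sum>m<nM. coeff f m * (s ^ m * poly (pderiv q) s))"
    by (rule ext) (simp only: poly_eq_sum_coeff[OF dfn] sum_distrib_right mult.assoc)
  then have "Ih (\<lambda>s. poly f s * poly (pderiv q) s) = (\<Sum>m<nM. coeff f m * Ih (\<lambda>s. s ^ m * poly (pderiv q) s))"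
    using Ih_sum[where A = "{..<nM}" and f = "\<lambda>m s. s ^ m * poly (pderiv q) s" and c = "coeff f", OF cm]
    by simp
  moreover have "poly q (-1) * poly f (-1) = (\<Sum>m<nM. coeff f m * (poly q (-1) * (-1) ^ m))"
    by (simp add: poly_eq_sum_coeff[OF dfn] sum_distrib_left algebra_simps)
  ultimately have "Ih (\<lambda>s. poly f s * poly (pderiv q) s) + (if k = 0 then poly q (-1) * poly f (-1) else 0)
      = (\<Sum>m<nM. coeff f m * (Ih (\<lambda>s. s ^ m * poly (pderiv q) s) + (if k = 0 then poly q (-1) * (-1) ^ m else 0)))"
    by (cases "k = 0") (simp_all add: sum.distrib distrib_left)
  then show ?thesis using zm by simp
qed

text \<open>For \<open>k \<ge> 1\<close> the endpoint conditions make \<open>q'\<close> divisible by the weight of (A1).\<close>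

lemma pderiv_weight_factor:
  assumes k: "1 \<le> k" and d: "degree q \<le> r" and z: "\<forall>j<ndofs. dof id (poly q) j = 0"
  obtains \<psi> where "poly \<psi> \<in> Pdeg (int r - int (max 1 k))"
    "\<And>t. poly (pderiv q) t = (1 - t) ^ (k div 2) * (1 + t) ^ nat \<bar>(int k - 1) div 2\<bar> * poly \<psi> t"
proof -
  define \<alpha> where "\<alpha> = k div 2"
  define \<beta> where "\<beta> = (k - 1) div 2"
  have \<beta>: "nat \<bar>(int k - 1) div 2\<bar> = \<beta>"
    unfolding \<beta>_def using k by (simp add: zdiv_int[symmetric] of_nat_diff)
  have nL: "nL = \<beta> + 1" unfolding nL_def \<beta>_def using k by simp
  have "\<forall>i<\<alpha>. poly ((pderiv ^^ i) (pderiv q)) 1 = 0"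
  proof safe
    fix i assume "i < \<alpha>"
    then have "dof id (poly q) (nL + Suc i - 1) = 0"
      using z unfolding ndofs_def nR_def \<alpha>_def by auto
    moreover have "dof id (poly q) (nL + Suc i - 1) = nderiv (Suc i) Iref (poly q) 1"
      by (rule dof_right) (use \<open>i < \<alpha>\<close> \<alpha>_def in auto)
    ultimately show "poly ((pderiv ^^ i) (pderiv q)) 1 = 0"
      by (simp add: nderiv_poly funpow_Suc_right del: funpow.simps)
  qed
  moreover have "\<forall>i<\<beta>. poly ((pderiv ^^ i) (pderiv q)) (-1) = 0"
  proof safe
    fix i assume "i < \<beta>"
    then have "dof id (poly q) (Suc i) = 0" using z unfolding ndofs_def nL by auto
    then show "poly ((pderiv ^^ i) (pderiv q)) (-1) = 0"
      using \<open>i < \<beta>\<close> by (simp add: nL dof_left nderiv_poly funpow_Suc_right del: funpow.simps)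
  qed
  ultimately obtain \<psi>0 where fac: "pderiv q = [:-1, 1:] ^ \<alpha> * [:1, 1:] ^ \<beta> * \<psi>0"
    by (rule poly_factor_endpoint_zeros)
  define \<psi> where "\<psi> = smult ((-1) ^ \<alpha>) \<psi>0"
  have "poly (pderiv q) t = (1 - t) ^ \<alpha> * (1 + t) ^ \<beta> * poly \<psi> t" for t
    unfolding fac \<psi>_def by (simp add: poly_power power_mult_distrib[symmetric] algebra_simps)
  moreover have "degree \<psi>0 \<le> r - k"
  proof (cases "\<psi>0 = 0")
    case False
    have "degree (pderiv q) = \<alpha> + \<beta> + degree \<psi>0"
      unfolding fac using False by (simp add: degree_mult_eq degree_linear_power)
    moreover have "\<alpha> + \<beta> = k - 1" unfolding \<alpha>_def \<beta>_def using k by linarith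
    ultimately show ?thesis using d k_le_r k by (simp add: degree_pderiv)
  qed simp
  then have "poly \<psi> \<in> Pdeg (int r - int (max 1 k))"
    using k k_le_r degree_smult_le[of "(-1) ^ \<alpha>" \<psi>0] unfolding \<psi>_def by (intro poly_in_Pdeg) auto
  ultimately show ?thesis using that unfolding \<alpha>_def \<beta> by blast
qed

lemma pderiv_eq_0_if_dofs_vanish:
  assumes d: "degree q \<le> r" and z: "\<forall>j<ndofs. dof id (poly q) j = 0"
  shows "pderiv q = 0"
proof -
  define w where "w t = (1 - t) ^ (k div 2) * (1 + t) ^ nat \<bar>(int k - 1) div 2\<bar>" for t :: real
  obtain \<psi> where \<psi>: "\<psi> \<in> Pdeg (int r - int (max 1 k))" and q': "\<psi> = (\<lambda>_. 0) \<Longrightarrow> pderiv q = 0"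
    and test: "\<And>\<phi>. \<phi> \<in> Pdeg (int r - int (max 1 k)) \<Longrightarrow> Ih (\<lambda>t. w t * \<psi> t * \<phi> t) = 0"
  proof (cases "k = 0")
    case True
    show ?thesis
    proof (rule that[of "poly (pderiv q)"])
      show "poly (pderiv q) \<in> Pdeg (int r - int (max 1 k))"
        using poly_pderiv_in_Pdeg[of q "int r"] d True by simp
      fix \<phi> assume "\<phi> \<in> Pdeg (int r - int (max 1 k))"
      then obtain f where \<phi>: "\<phi> = poly f" and f: "f = 0 \<or> degree f < r"
        using True by (elim PdegE) auto
      txt \<open>Here \<open>w t = 1 + t\<close>, which is absorbed into the test polynomial.\<close>
      have "degree ([:1, 1:] * f) \<le> r - k"
        using f True degree_mult_le[of "[:1, 1:]" f] by auto
      moreover have "(\<lambda>s. poly ([:1, 1:] * f) s * poly (pderiv q) s) = (\<lambda>t. w t * poly (pderiv q) t * \<phi> t)"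
        unfolding \<phi> w_def True by (rule ext) (simp add: algebra_simps)
      ultimately show "Ih (\<lambda>t. w t * poly (pderiv q) t * \<phi> t) = 0"
        using dofs_vanish_test[OF z] True by fastforce
    qed (simp add: poly_zero_eq[symmetric] poly_eq_poly_eq_iff)
  next
    case False
    then obtain \<psi> where \<psi>: "poly \<psi> \<in> Pdeg (int r - int (max 1 k))" and q': "\<And>t. poly (pderiv q) t = w t * poly \<psi> t"
      using pderiv_weight_factor[OF _ d z] unfolding w_def by (metis less_one not_le)
    show ?thesis
    proof (rule that[OF \<psi>])
      show "poly \<psi> = (\<lambda>_. 0) \<Longrightarrow> pderiv q = 0"
        using q' poly_all_0_iff_0 by auto
      fix \<phi> assume "\<phi> \<in> Pdeg (int r - int (max 1 k))"
      then obtain f where "\<phi> = poly f" "degree f \<le> r - k"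
        using False k_le_r by (elim PdegE) auto
      with dofs_vanish_test[OF z this(2)] show "Ih (\<lambda>t. w t * poly \<psi> t * \<phi> t) = 0"
        using False q' by (simp add: mult_ac)
    qed
  qed
  have "\<psi> = (\<lambda>_. 0)"
    by (rule unisolvence[OF \<psi>]) (use test w_def in \<open>simp add: mult_ac\<close>)
  then show ?thesis by (rule q')
qed

lemma dofs_unisolvent:
  assumes d: "degree q \<le> r" and z: "\<forall>j<ndofs. dof id (poly q) j = 0"
  shows "q = 0"
proof -
  obtain h where q: "q = [:h:]" using pderiv_eq_0_if_dofs_vanish[OF assms] pderiv_iszero by blast
  show ?thesis
  proof (cases "k = 0")
    case True
    have "dof id (poly q) (nL + nR + 0) = 0" using z unfolding ndofs_def nM_def by simp
    then show ?thesis using True unfolding dof_id_poly_moment q by (simp add: Ih_zero)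
  next
    case False
    then have "dof id (poly q) 0 = 0" "0 < nL" using z unfolding ndofs_def nL_def by auto
    then show ?thesis unfolding q by (simp add: dof_left)
  qed
qed

lemma coeff_bound_by_dofs:
  "\<exists>K\<ge>0. \<forall>c. (\<Sum>i<Suc r. \<bar>c i\<bar>) \<le> K * (\<Sum>j<ndofs. \<bar>dof id (\<lambda>t. \<Sum>i<Suc r. c i * t ^ i) j\<bar>)"
proof -
  define a where "a j i = dof id (\<lambda>t. t ^ i) j" for j i
  have lin: "dof id (\<lambda>t. \<Sum>i<Suc r. c i * t ^ i) j = (\<Sum>i<Suc r. a j i * c i)" for c j
    unfolding a_def by (subst dof_id_sum) (auto simp: Ck_on_power mult.commute)
  have "\<forall>i<Suc r. c i = 0" if "\<forall>j<ndofs. (\<Sum>i<Suc r. a j i * c i) = 0" for c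
  proof -
    define q where "q = (\<Sum>i<Suc r. monom (c i) i)"
    have "degree q \<le> r" by (rule degree_le) (auto simp: q_def coeff_sum_monom)
    moreover have "\<forall>j<ndofs. dof id (poly q) j = 0"
      using that lin unfolding q_def poly_sum_monom[symmetric] by simp
    ultimately have "q = 0" by (rule dofs_unisolvent)
    then show ?thesis using coeff_sum_monom[of c "Suc r"] unfolding q_def by (metis coeff_0)
  qed
  then show ?thesis using injective_linear_l1_bound[where N = ndofs and n = "Suc r" and a = a] lin by simp
qed

lemma dof_exact:
  assumes ex: "exact_for Ih Iop (-1) 1 (int n0 - 2) (int r - int k)" and q: "q = 0 \<or> degree q < n0"
    and j: "j < ndofs"
  shows "dof id (poly q) j = dof Iop (poly q) j"
proof (cases j rule: dof_index_cases)
  case (moment m)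
  have q': "poly (pderiv q) \<in> Pdeg (int n0 - 2)"
    using q poly_pderiv_in_Pdeg[of q "int n0 - 1"] zero_in_Pdeg by (auto simp: poly_zero_eq)
  have "m \<le> r - k" using moment_index_bound j unfolding moment .
  then have "(\<lambda>s. s ^ m) \<in> Pdeg (int r - int k)"
    unfolding poly_monom_one using k_le_r by (intro poly_in_Pdeg) (simp add: degree_monom_eq)
  from ex[unfolded exact_for_reference_iff, rule_format, OF q' this]
  have "Ih (\<lambda>s. poly (pderiv q) s * s ^ m) = Ih (\<lambda>s. Iop (poly (pderiv q)) s * s ^ m)" .
  then show ?thesis unfolding moment dof_id_poly_moment dof_Iop_poly_moment by (simp add: mult.commute)
next
  case (right i)
  show ?thesis unfolding right(3) dof_right[OF right(1,2)] by (rule refl)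
qed (simp add: dof_left)

lemma dof_Iop_diff:
  assumes f: "Ck_on M Iref f" and g: "Ck_on M Iref g"
  shows "dof Iop (\<lambda>t. f t - g t) j = dof Iop f j - dof Iop g j"
proof -
  have nd: "nderiv i Iref (\<lambda>t. f t - g t) t = nderiv i Iref f t - nderiv i Iref g t" if "i \<le> M" "t \<in> Iref" for i t
    by (rule nderiv_diff[OF minus_one_less_one f g that])
  show ?thesis
  proof (cases j rule: dof_index_cases)
    case left
    then show ?thesis using M_large nd[of j "-1"] by (simp add: dof_left)
  next
    case (right i)
    then show ?thesis using M_large nd[of i 1] unfolding right(3) dof_right[OF right(1,2)] by simp
  next
    case (moment m)
    let ?f1 = "nderiv 1 Iref f" and ?g1 = "nderiv 1 Iref g"
    have f1: "Ck_on kIop Iref ?f1" and g1: "Ck_on kIop Iref ?g1"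
      using Ck_on_mono[OF Ck_kIop_nderiv1[OF f] max.cobounded1]
        Ck_on_mono[OF Ck_kIop_nderiv1[OF g] max.cobounded1] .
    have "Iop (nderiv 1 Iref (\<lambda>t. f t - g t)) s = Iop ?f1 s - Iop ?g1 s" if s: "s \<in> Iref" for s
    proof -
      have "Iop (nderiv 1 Iref (\<lambda>t. f t - g t)) s = Iop (\<lambda>s. ?f1 s - ?g1 s) s"
        using M_large nd[of 1]
        by (intro Iop_cong[OF _ Ck_on_diff[OF minus_one_less_one f1 g1] _ s]
            Ck_on_mono[OF Ck_kIop_nderiv1[OF Ck_on_diff[OF minus_one_less_one f g]]]) auto
      then show ?thesis using Iop_diff[OF f1 g1 s] by simp
    qed
    then have "Ih (\<lambda>s. s ^ m * Iop (nderiv 1 Iref (\<lambda>t. f t - g t)) s)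
        = Ih (\<lambda>s. s ^ m * Iop ?f1 s - s ^ m * Iop ?g1 s)"
      by (intro Ih_cong Ck_on_diff[OF minus_one_less_one] Ck_moment_Iop f g Ck_on_diff[OF minus_one_less_one f g])
        (auto simp: right_diff_distrib)
    also have "\<dots> = Ih (\<lambda>s. s ^ m * Iop ?f1 s) - Ih (\<lambda>s. s ^ m * Iop ?g1 s)"
      by (rule Ih_diff[OF Ck_moment_Iop[OF f] Ck_moment_Iop[OF g]])
    finally show ?thesis unfolding moment dof_moment by (simp add: algebra_simps)
  qed
qed

lemma sum_shift_le_atMost:
  fixes a :: "nat \<Rightarrow> real"
  assumes "\<And>i. i \<le> M \<Longrightarrow> 0 \<le> a i" "X < M"
  shows "(\<Sum>j\<le>X. a (Suc j)) \<le> (\<Sum>j\<le>M. a j)"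
proof -
  have "(\<Sum>j\<le>X. a (Suc j)) = (\<Sum>j\<in>Suc ` {..X}. a j)" by (simp add: sum.reindex)
  also have "\<dots> \<le> (\<Sum>j\<le>M. a j)" by (rule sum_mono2) (use assms in auto)
  finally show ?thesis .
qed

lemma abs_nderiv_Iop_nderiv1_le:
  assumes f: "Ck_on M Iref f" and i: "i \<le> kI" and t: "t \<in> Iref"
  shows "\<bar>nderiv i Iref (Iop (nderiv 1 Iref f)) t\<bar> \<le> C1 * (\<Sum>j\<le>M. supn j Iref f Iref)"
proof -
  have f1: "Ck_on (max kIop i) Iref (nderiv 1 Iref f)"
    using Ck_on_mono[OF Ck_kIop_nderiv1[OF f]] i by simp
  have "\<bar>nderiv i Iref (Iop (nderiv 1 Iref f)) t\<bar> \<le> supn i Iref (Iop (nderiv 1 Iref f)) Iref"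
    using norm_nderiv_le_supn[OF reg_Iop[OF f1] order_refl order_refl t] by simp
  also have "\<dots> \<le> C1 * (\<Sum>j\<le>max kIop i. supn (Suc j) Iref f Iref)"
    using Iop_bound[OF i f1] unfolding supn_nderiv1 .
  also have "\<dots> \<le> C1 * (\<Sum>j\<le>M. supn j Iref f Iref)"
    using M_large i supn_nonneg[OF f] by (intro mult_left_mono C1_nonneg sum_shift_le_atMost) auto
  finally show ?thesis .
qed

text \<open>\<open>(r + 1)\<^sup>k\<^sup>I\<close> bounds the derivatives of \<open>s\<^sup>m\<close> on \<open>[-1, 1]\<close>; the Leibniz rule does the rest.\<close>

lemma abs_Ih_power_mult_le:
  assumes g: "Ck_on kI Iref g" and m: "m \<le> r"
    and B: "\<And>i t. i \<le> kI \<Longrightarrow> t \<in> Iref \<Longrightarrow> \<bar>nderiv i Iref g t\<bar> \<le> B"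
  shows "\<bar>Ih (\<lambda>s. s ^ m * g s)\<bar> \<le> C0 * (real kI + 1) ^ 3 * 2 ^ kI * (real r + 1) ^ kI * B"
proof -
  define R where "R = (real r + 1) ^ kI"
  have B0: "0 \<le> B" using B[of 0 0] by simp
  have R: "\<bar>nderiv i Iref (\<lambda>s. s ^ m) t\<bar> \<le> R" if "i \<le> kI" "t \<in> Iref" for i t
  proof -
    have "\<bar>t\<bar> \<le> 1" using that by auto
    then have "\<bar>nderiv i Iref (\<lambda>s. s ^ m) t\<bar> \<le> real m ^ i"
      using that abs_poly_funpow_pderiv_monom_le[of t i m] by (simp add: poly_monom_one nderiv_poly)
    also have "\<dots> \<le> (real r + 1) ^ kI"
      using m that by (intro order_trans[OF power_mono power_increasing]) auto
    finally show ?thesis unfolding R_def .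
  qed
  have cg: "Ck_on kI Iref (\<lambda>s. s ^ m * g s)" by (rule Ck_on_mult[OF minus_one_less_one Ck_on_power[OF minus_one_less_one] g])
  have "supn i Iref (\<lambda>s. s ^ m * g s) Iref \<le> 2 ^ kI * ((real kI + 1) * R) * ((real kI + 1) * B)"
    if i: "i \<le> kI" for i
  proof (rule supn_le)
    fix t assume t: "t \<in> Iref"
    have "(\<Sum>i'\<le>i. \<bar>nderiv i' Iref (\<lambda>s. s ^ m) t\<bar>) \<le> (\<Sum>i'\<le>i. R)"
      by (rule sum_mono) (use R i t in auto)
    also have "\<dots> \<le> (real kI + 1) * R"
      using i by (simp add: R_def mult_right_mono)
    finally have S1: "(\<Sum>i'\<le>i. \<bar>nderiv i' Iref (\<lambda>s. s ^ m) t\<bar>) \<le> (real kI + 1) * R" .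
    have "(\<Sum>i'\<le>i. norm (nderiv i' Iref g t)) \<le> (\<Sum>i'\<le>i. B)"
      by (rule sum_mono) (use B i t in auto)
    also have "\<dots> \<le> (real kI + 1) * B"
      using i B0 by (simp add: mult_right_mono)
    finally have S2: "(\<Sum>i'\<le>i. norm (nderiv i' Iref g t)) \<le> (real kI + 1) * B" .
    have "norm (nderiv i Iref (\<lambda>s. s ^ m * g s) t)
        \<le> 2 ^ i * (\<Sum>i'\<le>i. \<bar>nderiv i' Iref (\<lambda>s. s ^ m) t\<bar>) * (\<Sum>i'\<le>i. norm (nderiv i' Iref g t))"
      using norm_nderiv_scaleR_le[OF minus_one_less_one Ck_on_power[OF minus_one_less_one] g i t, of m] by simp
    also have "\<dots> \<le> 2 ^ kI * ((real kI + 1) * R) * ((real kI + 1) * B)"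
      using i by (intro mult_mono S1 S2 power_increasing) (auto intro: sum_nonneg simp: R_def)
    finally show "norm (nderiv i Iref (\<lambda>s. s ^ m * g s) t) \<le> 2 ^ kI * ((real kI + 1) * R) * ((real kI + 1) * B)" .
  qed simp
  then have "\<bar>Ih (\<lambda>s. s ^ m * g s)\<bar> \<le> C0 * (\<Sum>i\<le>kI. 2 ^ kI * ((real kI + 1) * R) * ((real kI + 1) * B))"
    by (intro order_trans[OF Ih_bound[OF cg]] mult_left_mono sum_mono C0_nonneg) auto
  then show ?thesis unfolding R_def by (simp add: power3_eq_cube algebra_simps)
qed

lemma dof_Iop_bound:
  "\<exists>K\<ge>0. \<forall>f. Ck_on M Iref f \<longrightarrow> (\<forall>j<ndofs. \<bar>dof Iop f j\<bar> \<le> K * (\<Sum>i\<le>M. supn i Iref f Iref))"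
proof -
  define K' where "K' = C0 * (real kI + 1) ^ 3 * 2 ^ kI * (real r + 1) ^ kI"
  have K'0: "0 \<le> K'" unfolding K'_def using C0_nonneg by simp
  have "\<bar>dof Iop f j\<bar> \<le> (1 + K' * C1) * (\<Sum>i\<le>M. supn i Iref f Iref)"
    if f: "Ck_on M Iref f" and j: "j < ndofs" for f j
  proof -
    define S where "S = (\<Sum>i\<le>M. supn i Iref f Iref)"
    have S0: "0 \<le> S" unfolding S_def using supn_nonneg[OF f] by (auto intro: sum_nonneg)
    have pt: "\<bar>nderiv i Iref f t\<bar> \<le> S" if "i \<le> M" "t \<in> Iref" for i t
      using norm_nderiv_le_supn[OF f that(1) order_refl that(2)] supn_nonneg[OF f] that(1)
        member_le_sum[of i "{..M}" "\<lambda>i. supn i Iref f Iref"] unfolding S_def by fastforce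
    have S1: "S \<le> (1 + K' * C1) * S" using S0 K'0 C1_nonneg by (simp add: algebra_simps)
    show ?thesis
    proof (cases j rule: dof_index_cases)
      case left
      then have "j \<le> M" using M_large(1) div_le_mono[of "k - 1" k 2] by linarith
      then show ?thesis using pt[of j "-1"] left S1 unfolding S_def[symmetric] by (simp add: dof_left)
    next
      case (right i)
      then show ?thesis using pt[of i 1] M_large S1
        unfolding S_def[symmetric] right(3) dof_right[OF right(1,2)] by simp
    next
      case (moment m)
      have "\<bar>Ih (\<lambda>s. s ^ m * Iop (nderiv 1 Iref f) s)\<bar> \<le> K' * (C1 * S)"
        unfolding K'_def S_def
        using moment_index_bound[OF j[unfolded moment]] k_le_r abs_nderiv_Iop_nderiv1_le[OF f]
        by (intro abs_Ih_power_mult_le reg_Iop Ck_kIop_nderiv1 f) auto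
      moreover have "\<bar>if k = 0 then f (-1) * (-1) ^ m else 0\<bar> \<le> S"
        using pt[of 0 "-1"] S0 by (simp add: abs_mult)
      ultimately show ?thesis
        unfolding moment dof_moment S_def[symmetric] by (simp add: algebra_simps)
    qed
  qed
  then show ?thesis using K'0 C1_nonneg by (intro exI[of _ "1 + K' * C1"]) auto
qed

lemma dofs_taylor_difference:
  assumes ex: "exact_for Ih Iop (-1) 1 (int n0 - 2) (int r - int k)" and n0r: "n0 \<le> Suc r"
    and f: "Ck_on M Iref f" and P: "\<forall>j<ndofs. dof id (\<lambda>t. \<Sum>i<Suc r. c i * t ^ i) j = dof Iop f j"
    and j: "j < ndofs"
  defines "q \<equiv> taylor_poly n0 f"
  shows "dof id (\<lambda>t. \<Sum>i<Suc r. (c i - coeff q i) * t ^ i) j = dof Iop (\<lambda>t. f t - poly q t) j"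
proof -
  have pw: "\<And>i. i \<in> {..<Suc r} \<Longrightarrow> Ck_on M Iref (\<lambda>t. t ^ i)" by (rule Ck_on_power[OF minus_one_less_one])
  have "dof id (\<lambda>t. \<Sum>i<Suc r. (c i - coeff q i) * t ^ i) j = (\<Sum>i<Suc r. (c i - coeff q i) * dof id (\<lambda>t. t ^ i) j)"
    by (rule dof_id_sum[OF _ pw]) simp
  also have "\<dots> = dof id (\<lambda>t. \<Sum>i<Suc r. c i * t ^ i) j - dof id (\<lambda>t. \<Sum>i<Suc r. coeff q i * t ^ i) j"
    by (simp only: dof_id_sum[OF finite_lessThan pw] left_diff_distrib sum_subtractf)
  also have "\<dots> = dof Iop f j - dof Iop (poly q) j"
    using P j dof_exact[OF ex taylor_poly_degree j] unfolding q_def poly_taylor_poly_eq_sum[OF n0r] by simp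
  also have "\<dots> = dof Iop (\<lambda>t. f t - poly q t) j"
    by (rule dof_Iop_diff[OF f Ck_on_poly[OF minus_one_less_one], symmetric])
  finally show ?thesis .
qed

lemma reference_estimate:
  assumes l: "l \<le> M" and n0M: "n0 \<le> M" and n0r: "n0 \<le> Suc r"
    and ex: "exact_for Ih Iop (-1) 1 (int n0 - 2) (int r - int k)"
  shows "\<exists>C\<ge>0. \<forall>f c. Ck_on M Iref f \<longrightarrow>
    (\<forall>j<ndofs. dof id (\<lambda>t. \<Sum>i<Suc r. c i * t ^ i) j = dof Iop f j) \<longrightarrow>
    (\<forall>t\<in>Iref. \<bar>nderiv l Iref (\<lambda>t. f t - (\<Sum>i<Suc r. c i * t ^ i)) t\<bar>
      \<le> C * (\<Sum>j=n0..M. supn j Iref f {-1<..1}))"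
proof -
  obtain K where K0: "K \<ge> 0"
    and K: "\<And>c. (\<Sum>i<Suc r. \<bar>c i\<bar>) \<le> K * (\<Sum>j<ndofs. \<bar>dof id (\<lambda>t. \<Sum>i<Suc r. c i * t ^ i) j\<bar>)"
    using coeff_bound_by_dofs by blast
  obtain KB where KB0: "KB \<ge> 0"
    and KB: "\<And>f j. Ck_on M Iref f \<Longrightarrow> j < ndofs \<Longrightarrow> \<bar>dof Iop f j\<bar> \<le> KB * (\<Sum>i\<le>M. supn i Iref f Iref)"
    using dof_Iop_bound by blast
  define C where "C = 1 + real r ^ l * K * real ndofs * KB * (real M + 1)"
  have "\<bar>nderiv l Iref (\<lambda>t. f t - (\<Sum>i<Suc r. c i * t ^ i)) t\<bar> \<le> C * (\<Sum>j=n0..M. supn j Iref f {-1<..1})"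
    if f: "Ck_on M Iref f" and P: "\<forall>j<ndofs. dof id (\<lambda>t. \<Sum>i<Suc r. c i * t ^ i) j = dof Iop f j"
      and t: "t \<in> Iref" for f c t
  proof -
    define B where "B = (\<Sum>j=n0..M. supn j Iref f {-1<..1})"
    define q where "q = taylor_poly n0 f"
    define W where "W t = f t - poly q t" for t
    define d where "d i = c i - coeff q i" for i
    have cW: "Ck_on M Iref W" unfolding W_def by (simp add: Ck_on_poly Ck_on_diff[OF minus_one_less_one f])
    have W: "\<bar>nderiv j Iref W s\<bar> \<le> B" if "j \<le> M" "s \<in> Iref" for j s
      unfolding W_def B_def q_def by (rule taylor_remainder_bound[OF f n0M that])
    have "(\<Sum>i\<le>M. supn i Iref W Iref) \<le> (\<Sum>i\<le>M. B)"
      using W by (intro sum_mono supn_le) auto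
    then have "(\<Sum>i\<le>M. supn i Iref W Iref) \<le> (real M + 1) * B" by (simp add: add.commute)
    then have dofW: "\<bar>dof Iop W j\<bar> \<le> KB * ((real M + 1) * B)" if "j < ndofs" for j
      using KB[OF cW that] KB0 by (meson mult_left_mono order_trans)
    have "(\<Sum>i<Suc r. \<bar>d i\<bar>) \<le> K * (\<Sum>j<ndofs. \<bar>dof id (\<lambda>t. \<Sum>i<Suc r. d i * t ^ i) j\<bar>)" by (rule K)
    also have "\<dots> = K * (\<Sum>j<ndofs. \<bar>dof Iop W j\<bar>)"
      using dofs_taylor_difference[OF ex n0r f P] unfolding d_def q_def W_def by simp
    also have "\<dots> \<le> K * (real ndofs * KB * ((real M + 1) * B))"
      using sum_mono[of "{..<ndofs}" "\<lambda>j. \<bar>dof Iop W j\<bar>" "\<lambda>_. KB * ((real M + 1) * B)"] dofW K0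
      by (intro mult_left_mono) (auto simp: mult.assoc)
    finally have coeffs: "(\<Sum>i<Suc r. \<bar>d i\<bar>) \<le> K * (real ndofs * KB * ((real M + 1) * B))" .
    have "(\<lambda>t. f t - (\<Sum>i<Suc r. c i * t ^ i)) = (\<lambda>t. W t - (\<Sum>i<Suc r. d i * t ^ i))"
      unfolding W_def d_def q_def poly_taylor_poly_eq_sum[OF n0r] by (simp add: fun_eq_iff left_diff_distrib sum_subtractf)
    moreover have "Ck_on M Iref (\<lambda>t. \<Sum>i<Suc r. d i * t ^ i)"
      unfolding poly_sum_monom by (rule Ck_on_poly[OF minus_one_less_one])
    ultimately have "\<bar>nderiv l Iref (\<lambda>t. f t - (\<Sum>i<Suc r. c i * t ^ i)) t\<bar>
        = \<bar>nderiv l Iref W t - nderiv l Iref (\<lambda>t. \<Sum>i<Suc r. d i * t ^ i) t\<bar>"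
      using nderiv_diff[OF minus_one_less_one cW _ l t] by (simp only:)
    also have "\<dots> \<le> B + real r ^ l * (K * (real ndofs * KB * ((real M + 1) * B)))"
      using W[OF l t] abs_nderiv_monomial_sum_le[OF t, where l = l and r = r and c = d] coeffs
      by (smt (verit) mult_left_mono zero_le_power of_nat_0_le_iff)
    finally show ?thesis unfolding B_def C_def by (simp add: algebra_simps)
  qed
  moreover have "C \<ge> 0" unfolding C_def using K0 KB0 by simp
  ultimately show ?thesis by blast
qed

lemma exact_for_minus_one: "exact_for Ih Iop (-1) 1 (-1) i"
  unfolding exact_for_reference_iff
proof safe
  fix \<phi> \<psi> assume \<phi>: "\<phi> \<in> Pdeg (-1)" and \<psi>: "\<psi> \<in> Pdeg i"
  obtain p where "\<phi> = poly p" "p = 0" using \<phi> by (rule PdegE) auto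
  then have \<phi>0: "\<phi> = (\<lambda>t. 0)" by (simp add: poly_zero_eq)
  obtain p2 where \<psi>p: "\<psi> = poly p2" using \<psi> by (rule PdegE)
  have c0: "Ck_on N Iref (\<lambda>t. 0::real)" for N by (rule Ck_on_const[OF minus_one_less_one])
  have "Iop (\<lambda>t. 0) t = 0" if "t \<in> Iref" for t
    using Iop_scale[OF c0 that, of 0] by simp
  then have "Ih (\<lambda>t. Iop (\<lambda>t. 0) t * \<psi> t) = Ih (\<lambda>t. 0)"
    unfolding \<psi>p by (intro Ih_cong Ck_on_mult[OF minus_one_less_one reg_Iop Ck_on_poly] c0) auto
  then show "Ih (\<lambda>t. \<phi> t * \<psi> t) = Ih (\<lambda>t. Iop \<phi> t * \<psi> t)" unfolding \<phi>0 by simp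
qed

lemma jmin_exact: "exact_for Ih Iop (-1) 1 (int (jmin Ih Iop (-1) 1 r k rc) - 2) (int r - int k)"
proof -
  define n0 where "n0 = jmin Ih Iop (-1) 1 r k rc"
  define T where "T = {s::int. s \<ge> -1 \<and> exact_for Ih Iop (-1) 1 s (int r - int k)}"
  define rr where "rr = rII Ih Iop (-1) 1 (int r - int k)"
  have rrT: "rr = Sup (ereal ` real_of_int ` T)"
    unfolding rr_def rII_def T_def by (rule arg_cong[where f = Sup]) auto
  have mT: "-1 \<in> T" unfolding T_def using exact_for_minus_one by simp
  have n0: "n0 = (if rr = \<infinity> then min rc (r + 1) else min rc (min (r + 1) (nat (\<lfloor>real_of_ereal rr\<rfloor> + 2))))"
    unfolding n0_def jmin_def rr_def Let_def ..
  have "\<exists>s\<in>T. int n0 - 2 \<le> s"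
  proof (cases "rr = \<infinity>")
    case True
    then show ?thesis using Sup_ereal_of_int_infinite unfolding rrT by blast
  next
    case False
    then obtain mx where mx: "mx \<in> T" "rr = ereal (real_of_int mx)"
      using Sup_ereal_of_int_attained[OF mT, of "-1"] unfolding rrT T_def by auto
    then have "n0 \<le> nat (mx + 2)" "-1 \<le> mx" unfolding n0 T_def by auto
    then show ?thesis using mx by (intro bexI[of _ mx]) linarith+
  qed
  then show ?thesis using exact_for_mono unfolding T_def n0_def by blast
qed

lemma Ck_nderiv1_Tmap_component:
  fixes f :: "real \<Rightarrow> real ^ 'd"
  assumes ab: "a < b" and f: "Ck_on M {a..b} f"
  shows "Ck_on (max kIop kI) Iref (\<lambda>s. nderiv 1 {a..b} f (Tmap a b s) $ c)"
  by (rule Ck_on_Tmap_component[OF ab Ck_on_nderiv1[OF f]]) (use M_large in auto)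

lemma moment_id_pullback:
  fixes f :: "real \<Rightarrow> real ^ 'd"
  assumes ab: "a < b" and f: "Ck_on M {a..b} f"
  shows "Ih (\<lambda>s. s ^ m * nderiv 1 Iref (\<lambda>s. f (Tmap a b s) $ c) s)
    = (b - a) / 2 * Ih (\<lambda>s. s ^ m * nderiv 1 {a..b} f (Tmap a b s) $ c)"
proof -
  let ?g = "\<lambda>s. s ^ m * nderiv 1 {a..b} f (Tmap a b s) $ c"
  have g: "Ck_on kI Iref ?g"
    using Ck_on_mono[OF Ck_nderiv1_Tmap_component[OF ab f] max.cobounded2]
    by (rule Ck_on_mult[OF minus_one_less_one Ck_on_power[OF minus_one_less_one]])
  have "Ih (\<lambda>s. s ^ m * nderiv 1 Iref (\<lambda>s. f (Tmap a b s) $ c) s) = Ih (\<lambda>s. (b - a) / 2 * ?g s)"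
    using M_large nderiv_Tmap_component[OF ab f, of 1]
    by (intro Ih_cong Ck_moment Ck_on_Tmap_component[OF ab f]
        Ck_on_linear[OF bounded_linear_mult_right minus_one_less_one g]) auto
  then show ?thesis unfolding Ih_scale[OF g] .
qed

lemma moment_Iop_pullback:
  fixes f :: "real \<Rightarrow> real ^ 'd"
  assumes ab: "a < b" and f: "Ck_on M {a..b} f"
  shows "Ih (\<lambda>s. s ^ m * Iop (nderiv 1 Iref (\<lambda>s. f (Tmap a b s) $ c)) s)
    = (b - a) / 2 * Ih (\<lambda>s. s ^ m * Iop (\<lambda>s. nderiv 1 {a..b} f (Tmap a b s) $ c) s)"
proof -
  let ?g = "\<lambda>s. nderiv 1 {a..b} f (Tmap a b s) $ c"
  have g: "Ck_on (max kIop kI) Iref ?g" by (rule Ck_nderiv1_Tmap_component[OF ab f])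
  then have g': "Ck_on kIop Iref ?g" by (rule Ck_on_mono) simp
  have hg: "Ck_on kIop Iref (\<lambda>s. (b - a) / 2 * ?g s)"
    by (rule Ck_on_linear[OF bounded_linear_mult_right minus_one_less_one g'])
  have mg: "Ck_on kI Iref (\<lambda>s. s ^ m * Iop ?g s)"
    by (rule Ck_on_mult[OF minus_one_less_one Ck_on_power[OF minus_one_less_one] reg_Iop[OF g]])
  have "Iop (nderiv 1 Iref (\<lambda>s. f (Tmap a b s) $ c)) s = (b - a) / 2 * Iop ?g s" if s: "s \<in> Iref" for s
  proof -
    have "Iop (nderiv 1 Iref (\<lambda>s. f (Tmap a b s) $ c)) s = Iop (\<lambda>s. (b - a) / 2 * ?g s) s"
      using M_large nderiv_Tmap_component[OF ab f, of 1]
      by (intro Iop_cong[OF Ck_on_mono[OF Ck_kIop_nderiv1[OF Ck_on_Tmap_component[OF ab f]] max.cobounded1] hg _ s])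
        auto
    then show ?thesis unfolding Iop_scale[OF g' s] .
  qed
  then have "Ih (\<lambda>s. s ^ m * Iop (nderiv 1 Iref (\<lambda>s. f (Tmap a b s) $ c)) s)
      = Ih (\<lambda>s. (b - a) / 2 * (s ^ m * Iop ?g s))"
    by (intro Ih_cong Ck_moment_Iop Ck_on_Tmap_component[OF ab f]
        Ck_on_linear[OF bounded_linear_mult_right minus_one_less_one mg]) auto
  then show ?thesis unfolding Ih_scale[OF mg] .
qed

lemma dof_transfer:
  fixes v p :: "real \<Rightarrow> real ^ 'd"
  assumes ab: "a < b" and v: "Ck_on M {a..b} v" and J: "is_Jn Ih Iop r k a b v p" and j: "j < ndofs"
  shows "dof id (\<lambda>s. p (Tmap a b s) $ c) j = dof Iop (\<lambda>s. v (Tmap a b s) $ c) j"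
proof -
  have p: "Ck_on M {a..b} p" using J Ck_on_VPdeg[OF ab] unfolding is_Jn_def by blast
  note Dp = nderiv_Tmap_component[OF ab p] and Dv = nderiv_Tmap_component[OF ab v]
  show ?thesis
  proof (cases j rule: dof_index_cases)
    case left
    then have "j \<le> M" using M_large(1) div_le_mono[of "k - 1" k 2] by linarith
    then show ?thesis using left J Dp[of j "-1"] Dv[of j "-1"] unfolding is_Jn_def by (simp add: dof_left)
  next
    case (right i)
    then have "i \<le> M" using M_large(1) by linarith
    then show ?thesis using right J Dp[of i 1] Dv[of i 1]
      unfolding is_Jn_def right(3) dof_right[OF right(1,2)] by simp
  next
    case (moment m)
    define \<phi> where "\<phi> t = (Tinv a b t) ^ m *\<^sub>R axis c (1::real)" for t
    have "m \<le> r - k" using moment_index_bound j unfolding moment .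
    then have "(\<lambda>s. s ^ m) \<in> Pdeg (int r - int k)"
      unfolding poly_monom_one using k_le_r by (intro poly_in_Pdeg) (simp add: degree_monom_eq)
    then have "\<phi> \<in> VPdeg (int r - int k)"
      unfolding \<phi>_def Tinv_affine[OF ab] by (intro axis_test_in_VPdeg Pdeg_affine)
    then have J: "locI Ih a b (\<lambda>t. inner (nderiv 1 {a..b} p t) (\<phi> t)) + (if k = 0 then inner (p a) (\<phi> a) else 0)
      = locI Ih a b (\<lambda>t. inner (locOpV Iop a b (nderiv 1 {a..b} v) t) (\<phi> t)) + (if k = 0 then inner (v a) (\<phi> a) else 0)"
      using J unfolding is_Jn_def by blast
    have "locOpV Iop a b (nderiv 1 {a..b} v) (Tmap a b s) $ c = Iop (\<lambda>s. nderiv 1 {a..b} v (Tmap a b s) $ c) s" for s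
      unfolding locOpV_def compOp_def using ab by simp
    then have Lv: "locI Ih a b (\<lambda>t. inner (locOpV Iop a b (nderiv 1 {a..b} v) t) (\<phi> t))
        = (b - a) / 2 * Ih (\<lambda>s. s ^ m * Iop (\<lambda>s. nderiv 1 {a..b} v (Tmap a b s) $ c) s)"
      unfolding \<phi>_def locI_axis_test[OF ab] by simp
    have Lp: "locI Ih a b (\<lambda>t. inner (nderiv 1 {a..b} p t) (\<phi> t))
        = (b - a) / 2 * Ih (\<lambda>s. s ^ m * nderiv 1 {a..b} p (Tmap a b s) $ c)"
      unfolding \<phi>_def by (rule locI_axis_test[OF ab])
    have endpoint: "inner x (\<phi> a) = x $ c * (-1) ^ m" for x :: "real ^ 'd"
      unfolding \<phi>_def Tinv_left[OF ab] by (simp add: inner_axis)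
    show ?thesis using J ab
      unfolding moment dof_moment Lp Lv id_apply moment_id_pullback[OF ab p] moment_Iop_pullback[OF ab v]
        endpoint
      by (cases "k = 0") auto
  qed
qed

lemma scaled_component_bound:
  fixes v p :: "real \<Rightarrow> real ^ 'd"
  assumes Cs: "0 \<le> Cs" "\<And>f c. Ck_on M Iref f \<Longrightarrow>
      (\<forall>j<ndofs. dof id (\<lambda>t. \<Sum>i<Suc r. c i * t ^ i) j = dof Iop f j) \<Longrightarrow>
      (\<forall>t\<in>Iref. \<bar>nderiv l Iref (\<lambda>t. f t - (\<Sum>i<Suc r. c i * t ^ i)) t\<bar>
        \<le> Cs * (\<Sum>j=n0..M. supn j Iref f {-1<..1}))"
    and l: "l \<le> M" and ab: "a < b" and v: "Ck_on M {a..b} v" and J: "is_Jn Ih Iop r k a b v p"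
    and s: "s \<in> Iref"
  shows "((b - a) / 2) ^ l * \<bar>nderiv l {a..b} (\<lambda>t. v t - p t) (Tmap a b s) $ c\<bar>
    \<le> Cs * (\<Sum>j=n0..M. ((b - a) / 2) ^ j * supn j {a..b} v {a<..b})"
proof -
  have pV: "p \<in> VPdeg (int r)" using J unfolding is_Jn_def by blast
  then obtain c' where P: "(\<lambda>s. p (Tmap a b s) $ c) = (\<lambda>s. \<Sum>i<Suc r. c' i * s ^ i)"
    by (rule VPdeg_Tmap_component)
  have p: "Ck_on M {a..b} p" by (rule Ck_on_VPdeg[OF ab pV])
  have vp: "Ck_on M {a..b} (\<lambda>t. v t - p t)" by (rule Ck_on_diff[OF ab v p])
  have "\<forall>j<ndofs. dof id (\<lambda>s. \<Sum>i<Suc r. c' i * s ^ i) j = dof Iop (\<lambda>s. v (Tmap a b s) $ c) j"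
    using dof_transfer[OF ab v J, where c = c] unfolding P by blast
  from Cs(2)[OF Ck_on_Tmap_component[OF ab v] this] s
  have "\<bar>nderiv l Iref (\<lambda>s. v (Tmap a b s) $ c - p (Tmap a b s) $ c) s\<bar>
      \<le> Cs * (\<Sum>j=n0..M. supn j Iref (\<lambda>s. v (Tmap a b s) $ c) {-1<..1})"
    unfolding fun_cong[OF P] by blast
  also have "\<dots> \<le> Cs * (\<Sum>j=n0..M. ((b - a) / 2) ^ j * supn j {a..b} v {a<..b})"
    by (intro mult_left_mono sum_mono supn_Tmap_component_le[OF ab v] Cs(1)) auto
  finally show ?thesis
    using nderiv_Tmap_component[OF ab vp l s, of c] ab by (simp add: abs_mult)
qed

lemma interval_estimate:
  assumes l: "l \<le> M" and n0M: "n0 \<le> M" and n0r: "n0 \<le> Suc r"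
    and ex: "exact_for Ih Iop (-1) 1 (int n0 - 2) (int r - int k)"
  shows "\<exists>C. \<forall>a b. a < b \<longrightarrow> (\<forall>(v :: real \<Rightarrow> real ^ 'd) p.
    Ck_on M {a..b} v \<longrightarrow> is_Jn Ih Iop r k a b v p \<longrightarrow>
      supn l {a..b} (\<lambda>t. v t - p t) {a<..b}
        \<le> C * (\<Sum>j=n0..M. ((b - a) / 2) powr (real j - real l) * supn j {a..b} v {a<..b}))"
proof -
  obtain Cs where Cs: "0 \<le> Cs" "\<And>f c. Ck_on M Iref f \<Longrightarrow>
      (\<forall>j<ndofs. dof id (\<lambda>t. \<Sum>i<Suc r. c i * t ^ i) j = dof Iop f j) \<Longrightarrow>
      (\<forall>t\<in>Iref. \<bar>nderiv l Iref (\<lambda>t. f t - (\<Sum>i<Suc r. c i * t ^ i)) t\<bar>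
        \<le> Cs * (\<Sum>j=n0..M. supn j Iref f {-1<..1}))"
    using reference_estimate[OF l n0M n0r ex] by blast
  have "supn l {a..b} (\<lambda>t. v t - p t) {a<..b}
      \<le> real CARD('d) * Cs * (\<Sum>j=n0..M. ((b - a) / 2) powr (real j - real l) * supn j {a..b} v {a<..b})"
    if ab: "a < b" and v: "Ck_on M {a..b} v" and J: "is_Jn Ih Iop r k a b v p" for a b and v p :: "real \<Rightarrow> real ^ 'd"
  proof (rule supn_le)
    define h where "h = (b - a) / 2"
    have h: "0 < h" unfolding h_def using ab by simp
    fix t assume t: "t \<in> {a<..b}"
    let ?s = "Tinv a b t"
    have s: "?s \<in> Iref" using Tinv_in_half_open[OF ab t] by auto
    have "h ^ l * norm (nderiv l {a..b} (\<lambda>t. v t - p t) t)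
        \<le> (\<Sum>c\<in>UNIV. h ^ l * \<bar>nderiv l {a..b} (\<lambda>t. v t - p t) (Tmap a b ?s) $ c\<bar>)"
      using norm_le_l1_cart h ab by (simp add: sum_distrib_left[symmetric])
    also have "\<dots> \<le> (\<Sum>c\<in>(UNIV :: 'd set). Cs * (\<Sum>j=n0..M. h ^ j * supn j {a..b} v {a<..b}))"
      unfolding h_def by (intro sum_mono scaled_component_bound[OF Cs l ab v J s])
    also have "\<dots> = h ^ l * (real CARD('d) * Cs * (\<Sum>j=n0..M. h powr (real j - real l) * supn j {a..b} v {a<..b}))"
      using h by (simp add: sum_distrib_left powr_diff powr_realpow field_simps)
    finally show "norm (nderiv l {a..b} (\<lambda>t. v t - p t) t)
        \<le> real CARD('d) * Cs * (\<Sum>j=n0..M. ((b - a) / 2) powr (real j - real l) * supn j {a..b} v {a<..b})"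
      using h unfolding h_def by (simp add: mult_le_cancel_left_pos)
  qed (use that in auto)
  then show ?thesis by blast
qed

end

section \<open>Componentwise operators and the main theorem\<close>

lemma supn_scaleR_const:
  fixes g :: "real \<Rightarrow> real" and e :: "'a::real_normed_vector"
  assumes xy: "x < y" and g: "Ck_on m {x..y} g" and j: "j \<le> m" and A: "A \<subseteq> {x..y}" "A \<noteq> {}"
  shows "supn j {x..y} (\<lambda>t. g t *\<^sub>R e) A = supn j {x..y} g A * norm e"
proof -
  have nd: "norm (nderiv j {x..y} (\<lambda>t. g t *\<^sub>R e) t) = \<bar>nderiv j {x..y} g t\<bar> * norm e" if "t \<in> A" for t
    using nderiv_linear[OF bounded_linear_scaleR_left xy g j, of t e] that A by auto
  show ?thesis
  proof (rule antisym)
    show "supn j {x..y} (\<lambda>t. g t *\<^sub>R e) A \<le> supn j {x..y} g A * norm e"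
      using nd norm_nderiv_le_supn[OF g j A(1)] by (intro supn_le A(2)) (simp add: mult_right_mono)
  next
    show "supn j {x..y} g A * norm e \<le> supn j {x..y} (\<lambda>t. g t *\<^sub>R e) A"
    proof (cases "e = 0")
      case False
      have "norm (nderiv j {x..y} (\<lambda>t. g t *\<^sub>R e) t) \<le> supn j {x..y} (\<lambda>t. g t *\<^sub>R e) A" if "t \<in> A" for t
        by (rule norm_nderiv_le_supn[OF Ck_on_linear[OF bounded_linear_scaleR_left xy g] j A(1) that])
      then have "supn j {x..y} g A \<le> supn j {x..y} (\<lambda>t. g t *\<^sub>R e) A / norm e"
        using nd False by (intro supn_le A(2)) (simp add: pos_le_divide_eq)
      then show ?thesis using False by (simp add: pos_le_divide_eq)
    qed (use supn_nonneg[OF Ck_on_linear[OF bounded_linear_scaleR_left xy g] j A, of e] in simp)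
  qed
qed

lemma Ih_bound_of_compI_bound:
  fixes Ih :: "(real \<Rightarrow> real) \<Rightarrow> real"
  assumes "\<exists>C0. \<forall>\<phi> :: real \<Rightarrow> real ^ 'd. Ck_on kI {-1..1} \<phi> \<longrightarrow>
    norm (compI Ih \<phi>) \<le> C0 * (\<Sum>j\<le>kI. supn j {-1..1} \<phi> {-1..1})"
  obtains C0 where "0 \<le> C0"
    "\<And>g. Ck_on kI {-1..1} g \<Longrightarrow> \<bar>Ih g\<bar> \<le> C0 * (\<Sum>j\<le>kI. supn j {-1..1} g {-1..1})"
proof -
  obtain C0 where C0: "\<And>\<phi> :: real \<Rightarrow> real ^ 'd. Ck_on kI Iref \<phi> \<Longrightarrow>
      norm (compI Ih \<phi>) \<le> C0 * (\<Sum>j\<le>kI. supn j Iref \<phi> Iref)" using assms by blast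
  define e where "e = (1 :: real ^ 'd)"
  have e: "0 < norm e" unfolding e_def by (simp add: vec_eq_iff)
  have "\<bar>Ih g\<bar> \<le> \<bar>C0\<bar> * (\<Sum>j\<le>kI. supn j Iref g Iref)" if g: "Ck_on kI Iref g" for g
  proof -
    have ge: "Ck_on kI Iref (\<lambda>t. g t *\<^sub>R e)" by (rule Ck_on_linear[OF bounded_linear_scaleR_left minus_one_less_one g])
    have "compI Ih (\<lambda>t. g t *\<^sub>R e) = Ih g *\<^sub>R e"
      unfolding compI_def e_def by (simp add: vec_eq_iff)
    then have "\<bar>Ih g\<bar> * norm e = norm (compI Ih (\<lambda>t. g t *\<^sub>R e))" by simp
    also have "\<dots> \<le> \<bar>C0\<bar> * (\<Sum>j\<le>kI. supn j Iref (\<lambda>t. g t *\<^sub>R e) Iref)"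
      using supn_nonneg[OF ge] by (intro order_trans[OF C0[OF ge]] mult_right_mono sum_nonneg) auto
    also have "\<dots> = (\<bar>C0\<bar> * (\<Sum>j\<le>kI. supn j Iref g Iref)) * norm e"
      by (simp add: supn_scaleR_const[OF minus_one_less_one g] sum_distrib_right mult.assoc)
    finally show ?thesis using e by simp
  qed
  then show ?thesis using that[of "\<bar>C0\<bar>"] by simp
qed

lemma Iop_bound_of_compOp_bound:
  fixes Iop :: "(real \<Rightarrow> real) \<Rightarrow> (real \<Rightarrow> real)"
  assumes reg: "\<And>m f. Ck_on (max kIop m) {-1..1} f \<Longrightarrow> Ck_on m {-1..1} (Iop f)"
    and "\<exists>C1. \<forall>m \<le> kI. \<forall>\<phi> :: real \<Rightarrow> real ^ 'd. Ck_on (max kIop m) {-1..1} \<phi> \<longrightarrow>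
      supn m {-1..1} (compOp Iop \<phi>) {-1..1} \<le> C1 * (\<Sum>j\<le>max kIop m. supn j {-1..1} \<phi> {-1..1})"
  obtains C1 where "0 \<le> C1" "\<And>m g. m \<le> kI \<Longrightarrow> Ck_on (max kIop m) {-1..1} g \<Longrightarrow>
    supn m {-1..1} (Iop g) {-1..1} \<le> C1 * (\<Sum>j\<le>max kIop m. supn j {-1..1} g {-1..1})"
proof -
  obtain C1 where C1: "\<And>m \<phi>. m \<le> kI \<Longrightarrow> Ck_on (max kIop m) Iref (\<phi> :: real \<Rightarrow> real ^ 'd) \<Longrightarrow>
      supn m Iref (compOp Iop \<phi>) Iref \<le> C1 * (\<Sum>j\<le>max kIop m. supn j Iref \<phi> Iref)" using assms(2) by blast
  define e where "e = (1 :: real ^ 'd)"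
  have e: "0 < norm e" unfolding e_def by (simp add: vec_eq_iff)
  have "supn m Iref (Iop g) Iref \<le> \<bar>C1\<bar> * (\<Sum>j\<le>max kIop m. supn j Iref g Iref)"
    if m: "m \<le> kI" and g: "Ck_on (max kIop m) Iref g" for m g
  proof -
    have ge: "Ck_on (max kIop m) Iref (\<lambda>t. g t *\<^sub>R e)" by (rule Ck_on_linear[OF bounded_linear_scaleR_left minus_one_less_one g])
    have "compOp Iop (\<lambda>t. g t *\<^sub>R e) = (\<lambda>t. Iop g t *\<^sub>R e)"
      unfolding compOp_def e_def by (simp add: vec_eq_iff fun_eq_iff)
    then have "supn m Iref (Iop g) Iref * norm e = supn m Iref (compOp Iop (\<lambda>t. g t *\<^sub>R e)) Iref"
      by (simp add: supn_scaleR_const[OF minus_one_less_one reg[OF g]])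
    also have "\<dots> \<le> \<bar>C1\<bar> * (\<Sum>j\<le>max kIop m. supn j Iref (\<lambda>t. g t *\<^sub>R e) Iref)"
      using supn_nonneg[OF ge] by (intro order_trans[OF C1[OF m ge]] mult_right_mono sum_nonneg) auto
    also have "\<dots> = (\<bar>C1\<bar> * (\<Sum>j\<le>max kIop m. supn j Iref g Iref)) * norm e"
      by (simp add: supn_scaleR_const[OF minus_one_less_one g] sum_distrib_right mult.assoc)
    finally show ?thesis using e by simp
  qed
  then show ?thesis using that[of "\<bar>C1\<bar>"] by simp
qed

theorem mainTheorem9:
  fixes r k kI kIop l rc :: nat
    and Ih :: "(real \<Rightarrow> real) \<Rightarrow> real"
    and Iop :: "(real \<Rightarrow> real) \<Rightarrow> (real \<Rightarrow> real)"
  assumes kr: "k \<le> r"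
    and lin_Ih: "\<And>f g c. Ck_on kI {-1..1} f \<Longrightarrow> Ck_on kI {-1..1} g \<Longrightarrow>
        Ih (\<lambda>t. f t + g t) = Ih f + Ih g \<and> Ih (\<lambda>t. c * f t) = c * Ih f"
    and lin_Iop: "\<And>f g c. Ck_on kIop {-1..1} f \<Longrightarrow> Ck_on kIop {-1..1} g \<Longrightarrow>
        (\<forall>t\<in>{-1..1}. Iop (\<lambda>s. f s + g s) t = Iop f t + Iop g t \<and> Iop (\<lambda>s. c * f s) t = c * Iop f t)"
    and reg_Iop: "\<And>m f. Ck_on (max kIop m) {-1..1} f \<Longrightarrow> Ck_on m {-1..1} (Iop f)"
    and A1: "\<And>\<psi>. \<psi> \<in> Pdeg (int r - int (max 1 k)) \<Longrightarrow>
        (\<forall>\<phi>\<in>Pdeg (int r - int (max 1 k)).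
           Ih (\<lambda>t. (1 - t) ^ (k div 2) * (1 + t) ^ nat \<bar>(int k - 1) div 2\<bar> * \<psi> t * \<phi> t) = 0)
        \<Longrightarrow> \<psi> = (\<lambda>_. 0)"
    and A2: "\<exists>C0. \<forall>\<phi> :: real \<Rightarrow> real ^ 'd. Ck_on kI {-1..1} \<phi> \<longrightarrow>
        norm (compI Ih \<phi>) \<le> C0 * (\<Sum>j\<le>kI. supn j {-1..1} \<phi> {-1..1})"
    and A3: "\<exists>C1. \<forall>m \<le> kI. \<forall>\<phi> :: real \<Rightarrow> real ^ 'd. Ck_on (max kIop m) {-1..1} \<phi> \<longrightarrow>
        supn m {-1..1} (compOp Iop \<phi>) {-1..1}
          \<le> C1 * (\<Sum>j\<le>max kIop m. supn j {-1..1} \<phi> {-1..1})"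
  shows "\<exists>C. \<forall>a b. a < b \<and> b - a \<le> 1 \<longrightarrow>
     (\<forall>(v :: real \<Rightarrow> real ^ 'd) p.
        let jmn = jmin Ih Iop a b r k rc;
            jmx = max (max (k div 2 - 1) (max kI kIop) + 1) (max l jmn)
        in Ck_on jmx {a..b} v \<longrightarrow> is_Jn Ih Iop r k a b v p \<longrightarrow>
           supn l {a..b} (\<lambda>t. v t - p t) {a<..b}
             \<le> C * (\<Sum>j = jmn..jmx. ((b - a) / 2) powr (real j - real l) * supn j {a..b} v {a<..b}))"
proof -
  obtain C0 where C0: "0 \<le> C0"
    "\<And>g. Ck_on kI {-1..1} g \<Longrightarrow> \<bar>Ih g\<bar> \<le> C0 * (\<Sum>j\<le>kI. supn j {-1..1} g {-1..1})"
    using Ih_bound_of_compI_bound[OF A2] by blast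
  obtain C1 where C1: "0 \<le> C1" "\<And>m g. m \<le> kI \<Longrightarrow> Ck_on (max kIop m) {-1..1} g \<Longrightarrow>
      supn m {-1..1} (Iop g) {-1..1} \<le> C1 * (\<Sum>j\<le>max kIop m. supn j {-1..1} g {-1..1})"
    using Iop_bound_of_compOp_bound[OF reg_Iop A3] by blast
  define n0 where "n0 = jmin Ih Iop (-1) 1 r k rc"
  define M where "M = max (max (k div 2 - 1) (max kI kIop) + 1) (max l n0)"
  have "k div 2 \<le> M" "kI < M" "kIop < M" unfolding M_def by (auto simp: max_def)
  then interpret reference_operators r k kI kIop M C0 C1 Ih Iop
    using kr lin_Ih lin_Iop reg_Iop A1 C0 C1 by unfold_locales auto
  have jm: "jmin Ih Iop a b r k rc = n0" if "a < b" for a b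
    unfolding n0_def by (rule jmin_affine_invariant[OF that])
  have "l \<le> M" "n0 \<le> M" "n0 \<le> Suc r" unfolding M_def n0_def by (simp_all add: jmin_le_Suc)
  from interval_estimate[OF this jmin_exact[of rc, folded n0_def]]
  show ?thesis unfolding Let_def M_def by (simp add: jm) blast
qed

end
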